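(* Let $0=t_0<\dots<t_N=1$ and let $\mu^\star_{t_0},\dots,\mu^\star_{t_N}$ be Gaussian measures on $\mathbb{R}$. Consider the Gaussian E-spline problem: minimize $\int_0^1\|\nabla_{v_t}v_t\|^2_{L^2(\gamma_t)}\,dt$ over curves $(\gamma_t)$ of Gaussian measures on $\mathbb{R}$ with tangent velocity fields $(v_t)$, subject to $\gamma_{t_i}=\mu^\star_{t_i}$ for all $i$. If this problem has an optimal solution $(\gamma^\star_t)$ which is a non-degenerate Gaussian for all $t\in[0,1]$, then $(\gamma^\star_t)$ is also the solution of the (unconstrained) E-spline problem on $\mathcal P_2(\mathbb{R})$.
   Context: The E-spline problem on the 2-Wasserstein space $\mathcal P_2(\mathbb{R})$: minimize $\int_0^1\|\nabla_{v_t}v_t\|^2_{L^2(\mu_t)}\,dt$ over curves $(\mu_t)$ in $\mathcal P_2(\mathbb{R})$ with tangent velocity fields $(v_t)$, subject to $\mu_{t_i}=\mu^\star_{t_i}$. Through the isometric embedding $\mu\mapsto F^{-1}_\mu$ (quantile function) of $\mathcal P_2(\mathbb{R})$ into $L^2[0,1]$, where the tangent field satisfies $\partial_tF^{-1}_{\mu_t}=v_t\circ F^{-1}_{\mu_t}$ and $\nabla_{v_t}v_t=\partial_tv_t+v_t'v_t$, the objective equals $\int_0^1\|\partial_t^2F^{-1}_{\mu_t}\|^2_{L^2[0,1]}dt$; this quantile formulation may be taken as the definition. *)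

theory Defs
  imports "HOL-Probability.Probability"
begin

definition P2 :: "real measure \<Rightarrow> bool" where
  "P2 \<mu> \<longleftrightarrow> prob_space \<mu> \<and> sets \<mu> = sets borel \<and> integrable \<mu> (\<lambda>x. x\<^sup>2)"

definition quantile :: "real measure \<Rightarrow> real \<Rightarrow> real" where
  "quantile \<mu> u = Inf {x. u \<le> measure \<mu> {..x}}"

text \<open>Gaussian measure N(m, s^2); s = 0 gives the degenerate Dirac measure at m.\<close>
definition gaussian :: "real \<Rightarrow> real \<Rightarrow> real measure" where
  "gaussian m s = (if s = 0 then return borel m else density lborel (normal_density m s))"

definition is_gaussian :: "real measure \<Rightarrow> bool" where
  "is_gaussian \<mu> \<longleftrightarrow> (\<exists>m s. s \<ge> 0 \<and> \<mu> = gaussian m s)"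

definition nondeg_gaussian :: "real measure \<Rightarrow> bool" where
  "nondeg_gaussian \<mu> \<longleftrightarrow> (\<exists>m s. s > 0 \<and> \<mu> = gaussian m s)"

text \<open>A curve (mu_t)_{t in [0,1]} in P_2(R) whose quantile curve t |-> F^{-1}_{mu_t}
  is twice differentiable in t (for every level u in (0,1)), with second time
  derivative A t u = d^2/dt^2 F^{-1}_{mu_t}(u).\<close>
definition admissible_curve :: "(real \<Rightarrow> real measure) \<Rightarrow> (real \<Rightarrow> real \<Rightarrow> real) \<Rightarrow> bool" where
  "admissible_curve \<mu> A \<longleftrightarrow>
     (\<forall>t\<in>{0..1}. P2 (\<mu> t)) \<and>
     (\<forall>u\<in>{0<..<1}. \<exists>V. \<forall>t\<in>{0..1}.
        ((\<lambda>s. quantile (\<mu> s) u) has_real_derivative V t) (at t within {0..1}) \<and>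
        (V has_real_derivative A t u) (at t within {0..1}))"

definition espline_cost :: "(real \<Rightarrow> real \<Rightarrow> real) \<Rightarrow> ennreal" where
  "espline_cost A = (\<integral>\<^sup>+ t. (\<integral>\<^sup>+ u. ennreal ((A t u)\<^sup>2) \<partial>lebesgue_on {0<..<1}) \<partial>lebesgue_on {0..1})"

definition interpolates :: "(real \<Rightarrow> real measure) \<Rightarrow> nat \<Rightarrow> (nat \<Rightarrow> real) \<Rightarrow> (nat \<Rightarrow> real measure) \<Rightarrow> bool" where
  "interpolates \<mu> N tt \<mu>s \<longleftrightarrow> (\<forall>i\<le>N. \<mu> (tt i) = \<mu>s i)"

end

(*
  Let nu be any admissible curve through the data, with acceleration B. Fix levels
  u_1, ..., u_n in (0, 1) and, at every time t, fit the sampled quantiles F^-1_{nu_t}(u_k)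
  by m_t + s_t Phi^-1(u_k) in the least-squares sense, Phi being the standard normal
  distribution function. By Chebyshev's sum inequality s_t >= 0, so t |-> N(m_t, s_t^2) is a
  Gaussian curve. It still interpolates the Gaussian data, because the fit reproduces affine
  data, and as the fit is linear its acceleration is the fit of the sampled accelerations
  B(t, u_k). The cost of a Gaussian curve is the integral of m''^2 + s''^2, and Bessel's
  inequality bounds this by (1 + O(eta)) h sum_k B(t, u_k)^2 as soon as the u_k are tags of a
  grid of mesh h on which the Riemann sums of Phi^-1 and (Phi^-1)^2 are eta-close to the
  moments 0 and 1. Choosing every u_k in its cell so that h sum_k int B(t, u_k)^2 dt exceeds
  the cost of nu by at most eta (which needs Tonelli, hence a jointly measurable version of B)
  shows that the optimal Gaussian cost is at most (1 + O(eta)) (cost of nu + eta).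
  Letting eta -> 0 gives the claim.
*)

theory Submission
  imports Defs
begin

section \<open>Quantile functions\<close>

lemma P2_imp_cdf_distribution: "P2 \<mu> \<Longrightarrow> cdf_distribution \<mu>"
  unfolding P2_def cdf_distribution_def real_distribution_def real_distribution_axioms_def
  by auto

lemma quantile_le_iff:
  assumes "P2 \<mu>" "0 < u" "u < 1"
  shows "quantile \<mu> u \<le> x \<longleftrightarrow> u \<le> measure \<mu> {..x}"
proof -
  interpret cdf_distribution \<mu> using assms(1) by (rule P2_imp_cdf_distribution)
  show ?thesis using pseudoinverse[OF assms(2,3), of x]
    by (simp add: quantile_def cdf_def)
qed

lemma quantile_eqI:
  assumes "P2 \<mu>" "0 < u" "u < 1" "\<And>x. u \<le> measure \<mu> {..x} \<longleftrightarrow> q \<le> x"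
  shows "quantile \<mu> u = q"
  using quantile_le_iff[OF assms(1-3)] assms(4) by (metis order.antisym order.refl)

lemma mono_on_quantile: "P2 \<mu> \<Longrightarrow> mono_on {0<..<1} (quantile \<mu>)"
proof -
  assume "P2 \<mu>"
  then interpret cdf_distribution \<mu> by (rule P2_imp_cdf_distribution)
  show ?thesis using mono_I unfolding quantile_def cdf_def .
qed

lemma borel_measurable_quantile:
  "P2 \<mu> \<Longrightarrow> quantile \<mu> \<in> borel_measurable (restrict_space lborel {0<..<1})"
  using borel_measurable_mono_on_fnc[OF mono_on_quantile]
  by (simp add: measurable_cong_sets[OF sets_restrict_space_cong[OF sets_lborel] refl])

lemma borel_measurable_indicator_quantile:
  assumes "P2 \<mu>"
  shows "(\<lambda>u. indicator {0<..<1} u * quantile \<mu> u) \<in> borel_measurable lborel"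
proof -
  have "(\<lambda>u. if u \<in> {0<..<1} then quantile \<mu> u else 0) \<in> borel_measurable borel"
    using borel_measurable_mono_on_fnc[OF mono_on_quantile[OF assms]]
    by (subst measurable_restrict_space_iff[symmetric]) auto
  then show ?thesis by (simp add: indicator_times_eq_if)
qed

lemma distr_quantile:
  "P2 \<mu> \<Longrightarrow> distr (restrict_space lborel {0<..<1}) borel (quantile \<mu>) = \<mu>"
proof -
  assume "P2 \<mu>"
  then interpret cdf_distribution \<mu> by (rule P2_imp_cdf_distribution)
  show ?thesis using distr_I_eq_M unfolding quantile_def cdf_def .
qed

lemma nn_integral_quantile:
  assumes \<mu>: "P2 \<mu>" and g: "g \<in> borel_measurable borel"
  shows "(\<integral>\<^sup>+u. g (quantile \<mu> u) \<partial>lebesgue_on {0<..<1}) = (\<integral>\<^sup>+x. g x \<partial>\<mu>)"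
proof -
  let ?R = "restrict_space lborel {0<..<1::real}"
  have "(\<integral>\<^sup>+u. g (quantile \<mu> u) \<partial>lebesgue_on {0<..<1})
      = (\<integral>\<^sup>+u. g (quantile \<mu> u) * indicator {0<..<1} u \<partial>lebesgue)"
    by (rule nn_integral_restrict_space) simp
  also have "\<dots> = (\<integral>\<^sup>+u. g (quantile \<mu> u) * indicator {0<..<1} u \<partial>lborel)"
    by (rule nn_integral_completion)
  also have "\<dots> = (\<integral>\<^sup>+u. g (quantile \<mu> u) \<partial>?R)"
    by (rule nn_integral_restrict_space[symmetric]) simp
  also have "\<dots> = (\<integral>\<^sup>+x. g x \<partial>distr ?R borel (quantile \<mu>))"
    by (rule nn_integral_distr[symmetric]) (use borel_measurable_quantile[OF \<mu>] g in auto)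
  finally show ?thesis unfolding distr_quantile[OF \<mu>] .
qed

section \<open>Gaussian measures\<close>

lemma P2_gaussian:
  assumes "s \<ge> 0" shows "P2 (gaussian m s)"
proof (cases "s = 0")
  case True
  have "integrable (return borel m) (\<lambda>x::real. x\<^sup>2)"
    by (subst integrable_iff_bounded) (simp add: nn_integral_return)
  then show ?thesis using True by (simp add: P2_def gaussian_def prob_space_return)
next
  case False
  then have s: "s > 0" using assms by simp
  have moment: "integrable lborel (\<lambda>x. normal_density m s x * (x - m)^k)" for k
    using s by (rule integrable_normal_moment)
  have "integrable lborel (\<lambda>x. normal_density m s x * (x - m)^2
          + 2 * m * (normal_density m s x * (x - m)^1) + m^2 * (normal_density m s x * (x - m)^0))"
    by (intro Bochner_Integration.integrable_add integrable_mult_right moment)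
  also have "(\<lambda>x. normal_density m s x * (x - m)^2
          + 2 * m * (normal_density m s x * (x - m)^1) + m^2 * (normal_density m s x * (x - m)^0))
      = (\<lambda>x. normal_density m s x * x\<^sup>2)"
    by (simp add: power2_eq_square algebra_simps)
  finally have "integrable (density lborel (normal_density m s)) (\<lambda>x. x\<^sup>2)"
    by (subst integrable_density) (auto simp: normal_density_nonneg)
  then show ?thesis using s
    by (simp add: P2_def gaussian_def prob_space_normal_density)
qed

lemma gaussian_eq_distr_affine:
  assumes s: "s > 0"
  shows "gaussian m s = distr (gaussian 0 1) borel (\<lambda>x. m + s * x)"
proof -
  interpret prob_space "gaussian 0 1"
    by (simp add: gaussian_def prob_space_normal_density)
  have "distributed (gaussian 0 1) lborel (\<lambda>x. x) (normal_density 0 1)"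
    by (simp add: distributed_def gaussian_def distr_id2 cong: distr_cong)
  from normal_density_affine[OF this, of s m] s
  have "distr (gaussian 0 1) lborel (\<lambda>x. m + s * x) = gaussian m s"
    by (simp add: distributed_def gaussian_def)
  moreover have "distr (gaussian 0 1) lborel (\<lambda>x. m + s * x) = distr (gaussian 0 1) borel (\<lambda>x. m + s * x)"
    by (rule distr_cong) auto
  ultimately show ?thesis by simp
qed

abbreviation std_normal_quantile :: "real \<Rightarrow> real" where
  "std_normal_quantile \<equiv> quantile (gaussian 0 1)"

lemma P2_std_normal: "P2 (gaussian 0 1)"
  by (rule P2_gaussian) simp

lemma mono_on_std_normal_quantile: "mono_on {0<..<1} std_normal_quantile"
  by (rule mono_on_quantile[OF P2_std_normal])

lemma quantile_gaussian:
  assumes "s \<ge> 0" "0 < u" "u < 1"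
  shows "quantile (gaussian m s) u = m + s * std_normal_quantile u"
proof (rule quantile_eqI[OF P2_gaussian[OF assms(1)] assms(2,3)])
  fix x
  show "u \<le> measure (gaussian m s) {..x} \<longleftrightarrow> m + s * std_normal_quantile u \<le> x"
  proof (cases "s = 0")
    case True
    then show ?thesis using assms by (simp add: gaussian_def measure_return split: split_indicator)
  next
    case False
    then have s: "s > 0" using assms by simp
    have sp: "space (gaussian 0 1) = UNIV" "sets (gaussian 0 1) = sets borel"
      using P2_std_normal by (auto simp: P2_def gaussian_def)
    have "measure (gaussian m s) {..x}
        = measure (gaussian 0 1) ((\<lambda>y. m + s * y) -` {..x} \<inter> space (gaussian 0 1))"
      unfolding gaussian_eq_distr_affine[OF s]
      by (rule measure_distr) (auto simp: sp measurable_cong_sets[OF sp(2) refl])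
    also have "(\<lambda>y. m + s * y) -` {..x} \<inter> space (gaussian 0 1) = {..(x - m) / s}"
      using s by (auto simp: sp field_simps)
    finally have "u \<le> measure (gaussian m s) {..x} \<longleftrightarrow> std_normal_quantile u \<le> (x - m) / s"
      using quantile_le_iff[OF P2_std_normal assms(2,3)] by simp
    also have "\<dots> \<longleftrightarrow> m + s * std_normal_quantile u \<le> x" using s by (simp add: field_simps)
    finally show ?thesis .
  qed
qed

lemma nn_integral_affine_std_normal_quantile_square:
  "(\<integral>\<^sup>+v. ennreal ((a + b * std_normal_quantile v)\<^sup>2) \<partial>lebesgue_on {0<..<1}) = ennreal (a\<^sup>2 + b\<^sup>2)"
proof -
  have m0: "has_bochner_integral lborel (\<lambda>x. std_normal_density x * x ^ (2 * 0)) 1"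
    using std_normal_moment_even[of 0] by simp
  have m1: "has_bochner_integral lborel (\<lambda>x. std_normal_density x * x ^ (2 * 0 + 1)) 0"
    using std_normal_moment_odd[of 0] by simp
  have m2: "has_bochner_integral lborel (\<lambda>x. std_normal_density x * x ^ (2 * 1)) 1"
    using std_normal_moment_even[of 1] by simp
  have "has_bochner_integral lborel (\<lambda>x. a\<^sup>2 * (std_normal_density x * x ^ (2 * 0))
          + (2 * a * b) * (std_normal_density x * x ^ (2 * 0 + 1)) + b\<^sup>2 * (std_normal_density x * x ^ (2 * 1)))
        (a\<^sup>2 * 1 + (2 * a * b) * 0 + b\<^sup>2 * 1)"
    by (intro has_bochner_integral_add has_bochner_integral_mult_right m0 m1 m2)
  moreover have "(\<lambda>x. a\<^sup>2 * (std_normal_density x * x ^ (2 * 0))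
          + (2 * a * b) * (std_normal_density x * x ^ (2 * 0 + 1)) + b\<^sup>2 * (std_normal_density x * x ^ (2 * 1)))
      = (\<lambda>x. std_normal_density x * (a + b * x)\<^sup>2)"
    by (rule ext) (simp add: power2_eq_square algebra_simps)
  ultimately have moments: "has_bochner_integral lborel (\<lambda>x. std_normal_density x * (a + b * x)\<^sup>2) (a\<^sup>2 + b\<^sup>2)"
    by simp
  have "(\<integral>\<^sup>+v. ennreal ((a + b * std_normal_quantile v)\<^sup>2) \<partial>lebesgue_on {0<..<1})
      = (\<integral>\<^sup>+x. ennreal ((a + b * x)\<^sup>2) \<partial>density lborel std_normal_density)"
    using nn_integral_quantile[OF P2_std_normal, of "\<lambda>x. ennreal ((a + b * x)\<^sup>2)"]
    by (simp add: gaussian_def)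
  also have "\<dots> = (\<integral>\<^sup>+x. ennreal (std_normal_density x * (a + b * x)\<^sup>2) \<partial>lborel)"
    by (subst nn_integral_density) (auto intro!: nn_integral_cong simp: ennreal_mult)
  also have "\<dots> = ennreal (integral\<^sup>L lborel (\<lambda>x. std_normal_density x * (a + b * x)\<^sup>2))"
    by (rule nn_integral_eq_integral) (use moments in \<open>auto simp: has_bochner_integral_iff\<close>)
  also have "integral\<^sup>L lborel (\<lambda>x. std_normal_density x * (a + b * x)\<^sup>2) = a\<^sup>2 + b\<^sup>2"
    by (rule has_bochner_integral_integral_eq[OF moments])
  finally show ?thesis .
qed

lemma integral_restrict_space_indicator_eq_integral:
  fixes f :: "real \<Rightarrow> real"
  assumes T: "T \<in> sets borel" and f: "integrable (restrict_space lborel T) f" and S: "{c..d} \<subseteq> T"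
  shows "integral\<^sup>L (restrict_space lborel T) (\<lambda>u. indicator {c..d} u * f u) = integral {c..d} f"
proof -
  have T': "T \<inter> space lborel \<in> sets lborel" using T by simp
  have ind: "indicator T u * (indicator {c..d} u * f u) = indicator {c..d} u * f u" for u :: real
    using S by (auto simp: indicator_def)
  have "{c..d} \<in> sets (restrict_space lborel T)"
    using S T by (subst sets_restrict_space_iff) auto
  from integrable_mult_indicator[OF this f]
  have "set_integrable lborel {c..d} f"
    unfolding set_integrable_def integrable_restrict_space[OF T'] using ind by simp
  then have "integral {c..d} f = (LINT u:{c..d}|lborel. f u)"
    by (rule set_borel_integral_eq_integral(2)[symmetric])
  also have "\<dots> = integral\<^sup>L (restrict_space lborel T) (\<lambda>u. indicator {c..d} u * f u)"
    unfolding set_lebesgue_integral_def integral_restrict_space[OF T'] by (simp only: ind real_scaleR_def)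
  finally show ?thesis by simp
qed

lemma integral_quantile_tendsto:
  fixes g :: "real \<Rightarrow> real"
  assumes \<mu>: "P2 \<mu>" and g: "integrable \<mu> g" and a: "a \<longlonglongrightarrow> 0" "\<And>j. 0 < a j"
  shows "(\<lambda>j. integral {a j..1 - a j} (\<lambda>u. g (quantile \<mu> u))) \<longlonglongrightarrow> (\<integral>x. g x \<partial>\<mu>)"
proof -
  let ?R = "restrict_space lborel {0<..<1::real}"
  define f where "f u = g (quantile \<mu> u)" for u
  have g_meas: "g \<in> borel_measurable borel"
    using g \<mu> by (auto simp: P2_def measurable_cong_sets[of \<mu> borel])
  have q_meas: "quantile \<mu> \<in> ?R \<rightarrow>\<^sub>M borel"
    by (rule borel_measurable_quantile[OF \<mu>])
  have f: "integrable ?R f" "integral\<^sup>L ?R f = (\<integral>x. g x \<partial>\<mu>)"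
    using integrable_distr_eq[OF q_meas g_meas] integral_distr[OF q_meas g_meas] g
    unfolding f_def distr_quantile[OF \<mu>] by simp_all
  have S: "{a j..1 - a j} \<subseteq> {0<..<1}" for j
    using a(2)[of j] by auto
  have "(\<lambda>j. integral\<^sup>L ?R (\<lambda>u. indicator {a j..1 - a j} u * f u)) \<longlonglongrightarrow> integral\<^sup>L ?R f"
  proof (rule integral_dominated_convergence[where w="\<lambda>u. \<bar>f u\<bar>"])
    show "AE u in ?R. (\<lambda>j. indicator {a j..1 - a j} u * f u) \<longlonglongrightarrow> f u"
    proof (rule AE_I2)
      fix u assume "u \<in> space ?R"
      then have "0 < min u (1 - u)" by (simp add: space_restrict_space)
      from order_tendstoD(2)[OF a(1) this]
      have "eventually (\<lambda>j. indicator {a j..1 - a j} u * f u = f u) sequentially"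
        by eventually_elim auto
      then show "(\<lambda>j. indicator {a j..1 - a j} u * f u) \<longlonglongrightarrow> f u"
        by (rule tendsto_eventually)
    qed
    show "(\<lambda>u. indicator {a j..1 - a j} u * f u) \<in> borel_measurable ?R" for j
    proof -
      have "{a j..1 - a j} \<in> sets ?R" using S[of j] by (subst sets_restrict_space_iff) auto
      then show ?thesis using f(1) by (intro borel_measurable_times borel_measurable_indicator) auto
    qed
  qed (use f(1) in \<open>auto simp: indicator_def\<close>)
  then show ?thesis
    using integral_restrict_space_indicator_eq_integral[OF _ f(1) S] f(2) unfolding f_def by simp
qed

section \<open>Riemann sums of monotone functions\<close>

lemma Riemann_sum_error_le_cells:
  fixes f :: "real \<Rightarrow> real"
  assumes h: "h > 0" and int: "f integrable_on {a..a + real n * h}"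
    and tag: "\<And>k. k < n \<Longrightarrow> u k \<in> {a + real k * h .. a + real (Suc k) * h}"
    and D: "\<And>k x. k < n \<Longrightarrow> x \<in> {a + real k * h .. a + real (Suc k) * h} \<Longrightarrow> \<bar>f (u k) - f x\<bar> \<le> D k"
  shows "\<bar>h * (\<Sum>k<n. f (u k)) - integral {a..a + real n * h} f\<bar> \<le> h * (\<Sum>k<n. D k)"
  using int tag D
proof (induction n)
  case 0
  then show ?case by simp
next
  case (Suc n)
  let ?l = "a + real n * h" and ?r = "a + real (Suc n) * h"
  have lr: "a \<le> ?l" "?l \<le> ?r" using h by auto
  have int_l: "f integrable_on {a..?l}" and int_lr: "f integrable_on {?l..?r}"
    by (rule integrable_on_subinterval[OF Suc.prems(1)]; use h in auto)+
  have IH: "\<bar>h * (\<Sum>k<n. f (u k)) - integral {a..?l} f\<bar> \<le> h * (\<Sum>k<n. D k)"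
    by (rule Suc.IH[OF int_l]) (use Suc.prems in auto)
  have split: "integral {a..?l} f + integral {?l..?r} f = integral {a..?r} f"
    by (rule Henstock_Kurzweil_Integration.integral_combine[OF lr Suc.prems(1)])
  have Dn: "\<And>x. x \<in> {?l..?r} \<Longrightarrow> \<bar>f (u n) - f x\<bar> \<le> D n" using Suc.prems(3)[of n] by auto
  have "integral {?l..?r} f \<le> integral {?l..?r} (\<lambda>x. f (u n) + D n)"
    by (rule integral_le[OF int_lr]) (use Dn in \<open>force simp: abs_le_iff\<close>)+
  moreover have "integral {?l..?r} (\<lambda>x. f (u n) - D n) \<le> integral {?l..?r} f"
    by (rule integral_le[OF _ int_lr]) (use Dn in \<open>force simp: abs_le_iff\<close>)+
  ultimately have "\<bar>h * f (u n) - integral {?l..?r} f\<bar> \<le> h * D n"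
    using h by (simp add: abs_le_iff algebra_simps)
  then show ?case
    using IH split by (simp add: algebra_simps abs_le_iff)
qed

lemma Riemann_sum_error_le_mono_dominated:
  fixes f g :: "real \<Rightarrow> real" and a h L :: real and n :: nat
  defines "b \<equiv> a + real n * h"
  assumes h: "h > 0" and int: "f integrable_on {a..b}" and g: "mono_on {a..b} g"
    and tag: "\<And>k. k < n \<Longrightarrow> u k \<in> {a + real k * h .. a + real (Suc k) * h}"
    and L: "L \<ge> 0" "\<And>x y. x \<in> {a..b} \<Longrightarrow> y \<in> {a..b} \<Longrightarrow> \<bar>f x - f y\<bar> \<le> L * \<bar>g x - g y\<bar>"
  shows "\<bar>h * (\<Sum>k<n. f (u k)) - integral {a..b} f\<bar> \<le> h * (L * (g b - g a))"
proof -
  let ?c = "\<lambda>k. a + real k * h"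
  have cell: "{?c k..?c (Suc k)} \<subseteq> {a..b}" if "k < n" for k
  proof -
    have "real (Suc k) * h \<le> real n * h" using h that by (intro mult_right_mono) auto
    then show ?thesis using h unfolding b_def by auto
  qed
  have "\<bar>h * (\<Sum>k<n. f (u k)) - integral {a..b} f\<bar> \<le> h * (\<Sum>k<n. L * (g (?c (Suc k)) - g (?c k)))"
    unfolding b_def
  proof (rule Riemann_sum_error_le_cells[OF h int[unfolded b_def] tag])
    fix k x assume k: "k < n" and x: "x \<in> {?c k..?c (Suc k)}"
    have uk: "u k \<in> {?c k..?c (Suc k)}" using tag k by auto
    have ends: "?c k \<in> {?c k..?c (Suc k)}" "?c (Suc k) \<in> {?c k..?c (Suc k)}" using h by auto
    have "g (?c k) \<le> g (u k)" "g (u k) \<le> g (?c (Suc k))" "g (?c k) \<le> g x" "g x \<le> g (?c (Suc k))"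
      using uk x ends cell[OF k] by (auto intro!: mono_onD[OF g])
    then have "\<bar>g (u k) - g x\<bar> \<le> g (?c (Suc k)) - g (?c k)" by linarith
    then have "L * \<bar>g (u k) - g x\<bar> \<le> L * (g (?c (Suc k)) - g (?c k))" using L(1) by (rule mult_left_mono)
    moreover have "\<bar>f (u k) - f x\<bar> \<le> L * \<bar>g (u k) - g x\<bar>" using L(2) cell[OF k] uk x by auto
    ultimately show "\<bar>f (u k) - f x\<bar> \<le> L * (g (?c (Suc k)) - g (?c k))" by linarith
  qed
  also have "(\<Sum>k<n. L * (g (?c (Suc k)) - g (?c k))) = L * (g b - g a)"
    unfolding b_def sum_distrib_left[symmetric] by (subst sum_lessThan_telescope) simp
  finally show ?thesis .
qed

lemma mono_on_imp_square_integrable_on: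
  fixes f :: "real \<Rightarrow> real"
  assumes f: "mono_on {a..b} f"
  shows "(\<lambda>x. (f x)\<^sup>2) integrable_on {a..b}"
proof -
  have "mono_on {a..b} (\<lambda>x. (f x - f a)\<^sup>2)"
  proof (rule mono_onI)
    fix x y assume "x \<in> {a..b}" "y \<in> {a..b}" "x \<le> y"
    then have "f a \<le> f x" "f x \<le> f y" by (auto intro!: mono_onD[OF f])
    then show "(f x - f a)\<^sup>2 \<le> (f y - f a)\<^sup>2" by (intro power_mono) auto
  qed
  then have "(\<lambda>x. (f x - f a)\<^sup>2) integrable_on {a..b}"
    by (rule integrable_on_mono_on)
  moreover have "(\<lambda>x. 2 * f a * f x) integrable_on {a..b}"
    using integrable_cmul[OF integrable_on_mono_on[OF f], of "2 * f a"] by simp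
  ultimately have "(\<lambda>x. (f x - f a)\<^sup>2 + 2 * f a * f x - (f a)\<^sup>2) integrable_on {a..b}"
    by (intro integrable_diff integrable_add integrable_const_ivl)
  also have "(\<lambda>x. (f x - f a)\<^sup>2 + 2 * f a * f x - (f a)\<^sup>2) = (\<lambda>x. (f x)\<^sup>2)"
    by (rule ext) (simp add: power2_eq_square algebra_simps)
  finally show ?thesis .
qed

lemma Riemann_sums_mono_on_uniform:
  fixes f :: "real \<Rightarrow> real" and a b \<epsilon> :: real
  assumes f: "mono_on {a..b} f" and ab: "a < b" and \<epsilon>: "\<epsilon> > 0"
  obtains n :: nat where "0 < n"
    "\<And>u. (\<And>k. k < n \<Longrightarrow> u k \<in> {a + real k * ((b - a) / n) .. a + real (Suc k) * ((b - a) / n)}) \<Longrightarrow>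
       \<bar>(b - a) / n * (\<Sum>k<n. f (u k)) - integral {a..b} f\<bar> \<le> \<epsilon> \<and>
       \<bar>(b - a) / n * (\<Sum>k<n. (f (u k))\<^sup>2) - integral {a..b} (\<lambda>x. (f x)\<^sup>2)\<bar> \<le> \<epsilon>"
proof -
  have fab: "f a \<le> f b" using ab by (auto intro!: mono_onD[OF f])
  define M where "M = max \<bar>f a\<bar> \<bar>f b\<bar>"
  have M: "\<bar>f x\<bar> \<le> M" if "x \<in> {a..b}" for x
    using that mono_onD[OF f, of a x] mono_onD[OF f, of x b] by (auto simp: M_def)
  define C where "C = (f b - f a) * (1 + 2 * M)"
  have "0 \<le> M" by (simp add: M_def)
  then have dC: "f b - f a \<le> C" "2 * M * (f b - f a) \<le> C"
    using fab mult_nonneg_nonneg[of M "f b - f a"] by (auto simp: C_def algebra_simps)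
  obtain n :: nat where n: "(b - a) * C / \<epsilon> < n" using reals_Archimedean2 by blast
  have "0 \<le> (b - a) * C / \<epsilon>" using ab \<epsilon> fab dC(1) by auto
  with n have n0: "0 < n" by linarith
  define h where "h = (b - a) / real n"
  have h: "h > 0" using ab n0 by (simp add: h_def)
  have "h * C \<le> \<epsilon>" using n n0 \<epsilon> by (simp add: h_def field_simps)
  then have hC: "h * (1 * (f b - f a)) \<le> \<epsilon>" "h * (2 * M * (f b - f a)) \<le> \<epsilon>"
    using h dC by (simp_all add: order_trans[OF mult_left_mono])
  have b: "a + real n * h = b" using n0 by (simp add: h_def)
  have square_Lipschitz: "\<bar>(f x)\<^sup>2 - (f y)\<^sup>2\<bar> \<le> 2 * M * \<bar>f x - f y\<bar>" if "x \<in> {a..b}" "y \<in> {a..b}" for x y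
  proof -
    have "\<bar>(f x)\<^sup>2 - (f y)\<^sup>2\<bar> = \<bar>f x + f y\<bar> * \<bar>f x - f y\<bar>"
      by (simp add: power2_eq_square abs_mult[symmetric] algebra_simps)
    also have "\<dots> \<le> 2 * M * \<bar>f x - f y\<bar>"
      using M[OF that(1)] M[OF that(2)] by (intro mult_right_mono) auto
    finally show ?thesis .
  qed
  show ?thesis
  proof (rule that[OF n0], fold h_def)
    fix u assume tag: "\<And>k. k < n \<Longrightarrow> u k \<in> {a + real k * h .. a + real (Suc k) * h}"
    have "\<bar>h * (\<Sum>k<n. f (u k)) - integral {a..b} f\<bar> \<le> h * (1 * (f b - f a))"
      using Riemann_sum_error_le_mono_dominated[OF h _ f[folded b] tag, of f 1] f
      by (simp add: b integrable_on_mono_on)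
    moreover have "\<bar>h * (\<Sum>k<n. (f (u k))\<^sup>2) - integral {a..b} (\<lambda>x. (f x)\<^sup>2)\<bar> \<le> h * (2 * M * (f b - f a))"
      using Riemann_sum_error_le_mono_dominated[OF h _ f[folded b] tag, of "\<lambda>x. (f x)\<^sup>2" "2 * M"]
        f square_Lipschitz by (simp add: b mono_on_imp_square_integrable_on M_def)
    ultimately show "\<bar>h * (\<Sum>k<n. f (u k)) - integral {a..b} f\<bar> \<le> \<epsilon> \<and>
        \<bar>h * (\<Sum>k<n. (f (u k))\<^sup>2) - integral {a..b} (\<lambda>x. (f x)\<^sup>2)\<bar> \<le> \<epsilon>"
      using hC by linarith
  qed
qed

lemma std_normal_quantile_truncated_moments:
  assumes \<eta>: "0 < \<eta>"
  obtains a :: real where "0 < a" "a \<le> \<eta>" "2 * a < 1"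
    "\<bar>integral {a..1 - a} std_normal_quantile\<bar> \<le> \<eta>"
    "\<bar>integral {a..1 - a} (\<lambda>x. (std_normal_quantile x)\<^sup>2) - 1\<bar> \<le> \<eta>"
proof -
  let ?z = std_normal_quantile
  define t where "t j = inverse (real (Suc j))" for j
  have t: "t \<longlonglongrightarrow> 0" "\<And>j. 0 < t j"
    unfolding t_def using LIMSEQ_inverse_real_of_nat by auto
  have gaussian01: "gaussian 0 1 = density lborel std_normal_density"
    by (simp add: gaussian_def)
  have "integrable (gaussian 0 1) (\<lambda>x. x ^ k)" for k
    unfolding gaussian01 using integrable_std_normal_moment[of k]
    by (subst integrable_density) auto
  note moment = integral_quantile_tendsto[OF P2_std_normal this t]
  have moment_eq: "(\<integral>x. x ^ k \<partial>gaussian 0 1) = (\<integral>x. std_normal_density x * x ^ k \<partial>lborel)" for k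
    unfolding gaussian01 by (subst integral_density) auto
  have "(\<lambda>j. integral {t j..1 - t j} ?z) \<longlonglongrightarrow> 0"
    using moment[of 1] moment_eq[of 1] integral_std_normal_moment_odd[of 0] by simp
  from tendstoD[OF this \<eta>]
  have "eventually (\<lambda>j. \<bar>integral {t j..1 - t j} ?z\<bar> < \<eta>) sequentially"
    by (simp add: dist_real_def)
  moreover have "(\<lambda>j. integral {t j..1 - t j} (\<lambda>x. (?z x)\<^sup>2)) \<longlonglongrightarrow> 1"
    using moment[of 2] moment_eq[of 2] integral_std_normal_moment_even[of 1] by simp
  from tendstoD[OF this \<eta>]
  have "eventually (\<lambda>j. \<bar>integral {t j..1 - t j} (\<lambda>x. (?z x)\<^sup>2) - 1\<bar> < \<eta>) sequentially"
    by (simp add: dist_real_def)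
  moreover have "eventually (\<lambda>j. t j < min \<eta> (1 / 2)) sequentially"
    using \<eta> by (intro order_tendstoD(2)[OF t(1)]) simp
  ultimately have "eventually (\<lambda>j. \<bar>integral {t j..1 - t j} ?z\<bar> < \<eta> \<and>
      \<bar>integral {t j..1 - t j} (\<lambda>x. (?z x)\<^sup>2) - 1\<bar> < \<eta> \<and> t j < min \<eta> (1 / 2)) sequentially"
    by (intro eventually_conj)
  then obtain j where "\<bar>integral {t j..1 - t j} ?z\<bar> < \<eta>"
      "\<bar>integral {t j..1 - t j} (\<lambda>x. (?z x)\<^sup>2) - 1\<bar> < \<eta>" "t j < min \<eta> (1 / 2)"
    unfolding eventually_sequentially by blast
  with t(2)[of j] show ?thesis by (intro that[of "t j"]) auto
qed

lemma std_normal_quantile_Riemann_grid: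
  assumes \<eta>: "0 < \<eta>"
  obtains a :: real and n :: nat where "0 < a" "a \<le> \<eta>" "2 * a < 1" "0 < n"
    "\<And>u. (\<And>k. k < n \<Longrightarrow> u k \<in> {a + real k * ((1 - 2 * a) / n) .. a + real (Suc k) * ((1 - 2 * a) / n)}) \<Longrightarrow>
       \<bar>(1 - 2 * a) / n * (\<Sum>k<n. std_normal_quantile (u k))\<bar> \<le> \<eta> \<and>
       \<bar>(1 - 2 * a) / n * (\<Sum>k<n. (std_normal_quantile (u k))\<^sup>2) - 1\<bar> \<le> \<eta>"
proof -
  have "0 < \<eta> / 2" using \<eta> by simp
  then obtain a where a: "0 < a" "a \<le> \<eta> / 2" "2 * a < 1"
    and moments: "\<bar>integral {a..1 - a} std_normal_quantile\<bar> \<le> \<eta> / 2"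
      "\<bar>integral {a..1 - a} (\<lambda>x. (std_normal_quantile x)\<^sup>2) - 1\<bar> \<le> \<eta> / 2"
    by (rule std_normal_quantile_truncated_moments)
  have mono: "mono_on {a..1 - a} std_normal_quantile"
    by (rule mono_on_subset[OF mono_on_std_normal_quantile]) (use a in auto)
  have "a < 1 - a" and width: "1 - a - a = 1 - 2 * a" using a by auto
  obtain n where "0 < n"
    and Riemann: "\<And>u. (\<And>k. k < n \<Longrightarrow> u k \<in> {a + real k * ((1 - 2 * a) / n) .. a + real (Suc k) * ((1 - 2 * a) / n)}) \<Longrightarrow>
       \<bar>(1 - 2 * a) / n * (\<Sum>k<n. std_normal_quantile (u k)) - integral {a..1 - a} std_normal_quantile\<bar> \<le> \<eta> / 2 \<and>
       \<bar>(1 - 2 * a) / n * (\<Sum>k<n. (std_normal_quantile (u k))\<^sup>2)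
          - integral {a..1 - a} (\<lambda>x. (std_normal_quantile x)\<^sup>2)\<bar> \<le> \<eta> / 2"
    using Riemann_sums_mono_on_uniform[OF mono \<open>a < 1 - a\<close> \<open>0 < \<eta> / 2\<close>, unfolded width] by blast
  show ?thesis
  proof (rule that[OF a(1) _ a(3) \<open>0 < n\<close>])
    show "a \<le> \<eta>" using a \<eta> by simp
    fix u assume "\<And>k. k < n \<Longrightarrow> u k \<in> {a + real k * ((1 - 2 * a) / n) .. a + real (Suc k) * ((1 - 2 * a) / n)}"
    from Riemann[OF this] moments
    show "\<bar>(1 - 2 * a) / n * (\<Sum>k<n. std_normal_quantile (u k))\<bar> \<le> \<eta> \<and>
        \<bar>(1 - 2 * a) / n * (\<Sum>k<n. (std_normal_quantile (u k))\<^sup>2) - 1\<bar> \<le> \<eta>"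
      by linarith
  qed
qed

section \<open>Least-squares fits\<close>

definition sample_mean :: "nat \<Rightarrow> (nat \<Rightarrow> real) \<Rightarrow> real" where
  "sample_mean n x = (\<Sum>k<n. x k) / real n"

definition ls_slope :: "nat \<Rightarrow> (nat \<Rightarrow> real) \<Rightarrow> (nat \<Rightarrow> real) \<Rightarrow> real" where
  "ls_slope n z x = (\<Sum>k<n. (z k - sample_mean n z) * x k) / (\<Sum>k<n. (z k - sample_mean n z)\<^sup>2)"

definition ls_intercept :: "nat \<Rightarrow> (nat \<Rightarrow> real) \<Rightarrow> (nat \<Rightarrow> real) \<Rightarrow> real" where
  "ls_intercept n z x = sample_mean n x - sample_mean n z * ls_slope n z x"

definition ls_fit :: "nat \<Rightarrow> (nat \<Rightarrow> real) \<Rightarrow> (nat \<Rightarrow> real) \<Rightarrow> real \<Rightarrow> real" where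
  "ls_fit n z x c = ls_intercept n z x + ls_slope n z x * c"

lemma sum_centered_eq_0: "n > 0 \<Longrightarrow> (\<Sum>k<n. x k - sample_mean n x) = 0"
  by (simp add: sample_mean_def sum_subtractf)

lemma ls_fit_cong:
  assumes "\<And>k. k < n \<Longrightarrow> x k = y k"
  shows "ls_slope n z x = ls_slope n z y" "ls_intercept n z x = ls_intercept n z y"
proof -
  have "(\<Sum>k<n. x k) = (\<Sum>k<n. y k)" "(\<Sum>k<n. (z k - sample_mean n z) * x k) = (\<Sum>k<n. (z k - sample_mean n z) * y k)"
    using assms by (auto intro!: sum.cong)
  then show "ls_slope n z x = ls_slope n z y" "ls_intercept n z x = ls_intercept n z y"
    by (simp_all add: ls_slope_def ls_intercept_def sample_mean_def)
qed

lemma ls_fit_affine: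
  assumes n: "n > 0" and D: "(\<Sum>k<n. (z k - sample_mean n z)\<^sup>2) \<noteq> 0"
  shows "ls_slope n z (\<lambda>k. m + s * z k) = s" "ls_intercept n z (\<lambda>k. m + s * z k) = m"
proof -
  let ?zb = "sample_mean n z"
  have "(\<Sum>k<n. (z k - ?zb) * (m + s * z k)) = (\<Sum>k<n. (m + s * ?zb) * (z k - ?zb) + s * (z k - ?zb)\<^sup>2)"
    by (rule sum.cong) (auto simp: power2_eq_square algebra_simps)
  also have "\<dots> = s * (\<Sum>k<n. (z k - ?zb)\<^sup>2)"
    using sum_centered_eq_0[OF n, of z] by (simp add: sum.distrib sum_distrib_left[symmetric])
  finally show slope: "ls_slope n z (\<lambda>k. m + s * z k) = s"
    using D by (simp add: ls_slope_def)
  have "sample_mean n (\<lambda>k. m + s * z k) = m + s * ?zb"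
    using n by (simp add: sample_mean_def sum.distrib sum_distrib_left[symmetric] field_simps)
  then show "ls_intercept n z (\<lambda>k. m + s * z k) = m"
    by (simp add: ls_intercept_def slope)
qed

(* Chebyshev's sum inequality *)
lemma ls_slope_nonneg:
  assumes n: "n > 0" and comono: "\<And>i j. i < n \<Longrightarrow> j < n \<Longrightarrow> 0 \<le> (z i - z j) * (x i - x j)"
  shows "0 \<le> ls_slope n z x"
proof -
  have "0 \<le> (\<Sum>i<n. \<Sum>j<n. (z i - z j) * (x i - x j))"
    by (intro sum_nonneg comono) auto
  also have "(\<Sum>i<n. \<Sum>j<n. (z i - z j) * (x i - x j))
      = 2 * real n * (\<Sum>k<n. z k * x k) - 2 * (\<Sum>k<n. z k) * (\<Sum>k<n. x k)"
    by (simp add: algebra_simps sum.distrib sum_subtractf sum_distrib_left[symmetric]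
        sum_distrib_right[symmetric] sum.swap[of _ "{..<n}" "{..<n}"])
  also have "\<dots> = 2 * real n * (\<Sum>k<n. (z k - sample_mean n z) * x k)"
  proof -
    have centered: "(\<Sum>k<n. (z k - c) * x k) = (\<Sum>k<n. z k * x k) - c * (\<Sum>k<n. x k)" for c
      by (simp add: left_diff_distrib sum_subtractf sum_distrib_left)
    show ?thesis unfolding centered using n by (simp add: sample_mean_def field_simps)
  qed
  finally have "0 \<le> (\<Sum>k<n. (z k - sample_mean n z) * x k)"
    using n by (simp add: zero_le_mult_iff)
  then show ?thesis by (auto simp: ls_slope_def intro!: divide_nonneg_nonneg sum_nonneg)
qed

(* Bessel's inequality for the orthogonal vectors 1 and z - sample_mean n z *)
lemma ls_Bessel:
  assumes n: "n > 0" and D: "(\<Sum>k<n. (z k - sample_mean n z)\<^sup>2) > 0"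
  shows "real n * (sample_mean n x)\<^sup>2 + (\<Sum>k<n. (z k - sample_mean n z)\<^sup>2) * (ls_slope n z x)\<^sup>2
    \<le> (\<Sum>k<n. (x k)\<^sup>2)"
proof -
  define d where "d k = z k - sample_mean n z" for k
  define xb where "xb = sample_mean n x"
  have "(\<Sum>k<n. d k * x k) = (\<Sum>k<n. d k * (x k - xb))"
    using sum_centered_eq_0[OF n, of z]
    by (simp add: d_def right_diff_distrib sum_subtractf sum_distrib_right[symmetric])
  then have CS: "(\<Sum>k<n. d k * x k)\<^sup>2 \<le> (\<Sum>k<n. (d k)\<^sup>2) * (\<Sum>k<n. (x k - xb)\<^sup>2)"
    using Cauchy_Schwarz_ineq_sum[of d "\<lambda>k. x k - xb" "{..<n}"] by simp
  have "(\<Sum>k<n. (x k - xb)\<^sup>2) = (\<Sum>k<n. (x k)\<^sup>2) - 2 * xb * (\<Sum>k<n. x k) + real n * xb\<^sup>2"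
    by (simp add: power2_eq_square algebra_simps sum.distrib sum_subtractf sum_distrib_left)
  then have var: "(\<Sum>k<n. (x k - xb)\<^sup>2) = (\<Sum>k<n. (x k)\<^sup>2) - real n * xb\<^sup>2"
    using n by (simp add: xb_def sample_mean_def power2_eq_square field_simps)
  have "(\<Sum>k<n. (d k)\<^sup>2) * (ls_slope n z x)\<^sup>2 = (\<Sum>k<n. d k * x k)\<^sup>2 / (\<Sum>k<n. (d k)\<^sup>2)"
    using D by (simp add: ls_slope_def d_def power2_eq_square)
  also have "\<dots> \<le> (\<Sum>k<n. (x k - xb)\<^sup>2)"
    using CS D by (simp add: d_def divide_le_eq mult.commute)
  finally show ?thesis using var unfolding d_def xb_def by linarith
qed

definition ls_fit_bound :: "nat \<Rightarrow> (nat \<Rightarrow> real) \<Rightarrow> real" where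
  "ls_fit_bound n z = max ((1 + \<bar>sample_mean n z\<bar>) / n)
     ((1 + \<bar>sample_mean n z\<bar> + (sample_mean n z)\<^sup>2) / (\<Sum>k<n. (z k - sample_mean n z)\<^sup>2))"

lemma ls_fit_square_le:
  assumes n: "n > 0" and D: "(\<Sum>k<n. (z k - sample_mean n z)\<^sup>2) > 0"
  shows "(ls_intercept n z x)\<^sup>2 + (ls_slope n z x)\<^sup>2 \<le> ls_fit_bound n z * (\<Sum>k<n. (x k)\<^sup>2)"
proof -
  define zb where "zb = sample_mean n z"
  define P where "P = sample_mean n x"
  define S where "S = ls_slope n z x"
  define D2 where "D2 = (\<Sum>k<n. (z k - zb)\<^sup>2)"
  define K where "K = ls_fit_bound n z"
  have D2: "D2 > 0" using D by (simp add: D2_def zb_def)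
  have "(1 + \<bar>zb\<bar>) / n \<le> K" "(1 + \<bar>zb\<bar> + zb\<^sup>2) / D2 \<le> K"
    by (simp_all add: K_def ls_fit_bound_def zb_def D2_def)
  then have K1: "1 + \<bar>zb\<bar> \<le> K * n" and K2: "1 + \<bar>zb\<bar> + zb\<^sup>2 \<le> K * D2"
    using n D2 by (simp_all add: divide_le_eq)
  have "\<bar>2 * P * S\<bar> \<le> P\<^sup>2 + S\<^sup>2"
    using sum_squares_bound[of P S] sum_squares_bound[of P "-S"] by (auto simp: abs_if algebra_simps)
  then have "\<bar>2 * P * S * zb\<bar> \<le> \<bar>zb\<bar> * (P\<^sup>2 + S\<^sup>2)"
    by (simp add: abs_mult mult.commute mult_left_mono)
  then have "(P - zb * S)\<^sup>2 + S\<^sup>2 \<le> (1 + \<bar>zb\<bar>) * P\<^sup>2 + (1 + \<bar>zb\<bar> + zb\<^sup>2) * S\<^sup>2"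
    by (simp add: power2_eq_square algebra_simps abs_le_iff)
  also have "\<dots> \<le> (K * n) * P\<^sup>2 + (K * D2) * S\<^sup>2"
    by (intro add_mono mult_right_mono K1 K2) auto
  also have "\<dots> = K * (n * P\<^sup>2 + D2 * S\<^sup>2)" by (simp add: algebra_simps)
  also have "\<dots> \<le> K * (\<Sum>k<n. (x k)\<^sup>2)"
  proof (rule mult_left_mono)
    show "n * P\<^sup>2 + D2 * S\<^sup>2 \<le> (\<Sum>k<n. (x k)\<^sup>2)"
      using ls_Bessel[OF n D, of x] by (simp add: P_def S_def D2_def zb_def)
    show "0 \<le> K" by (simp add: K_def ls_fit_bound_def le_max_iff_disj)
  qed
  finally show ?thesis by (simp add: ls_intercept_def P_def S_def K_def zb_def)
qed

lemma ls_fit_bound_le: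
  fixes z :: "nat \<Rightarrow> real" and h \<eta> :: real
  assumes n: "n > 0" and h: "h > 0" and \<eta>: "0 < \<eta>" "\<eta> \<le> 1 / 8"
    and mesh: "1 - 2 * \<eta> \<le> real n * h" "real n * h \<le> 1"
    and moment1: "\<bar>h * (\<Sum>k<n. z k)\<bar> \<le> \<eta>" and moment2: "\<bar>h * (\<Sum>k<n. (z k)\<^sup>2) - 1\<bar> \<le> \<eta>"
  shows "(\<Sum>k<n. (z k - sample_mean n z)\<^sup>2) > 0" "ls_fit_bound n z \<le> h * ((1 + 3 * \<eta>) / (1 - 2 * \<eta>))"
proof -
  define zb where "zb = sample_mean n z"
  define W where "W = real n * h"
  define V where "V = h * (\<Sum>k<n. (z k - zb)\<^sup>2)"
  have sum1: "h * (\<Sum>k<n. z k) = W * zb"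
    using n by (simp add: W_def zb_def sample_mean_def)
  have expand: "(\<Sum>k<n. (z k - zb)\<^sup>2) = (\<Sum>k<n. (z k)\<^sup>2) - 2 * zb * (\<Sum>k<n. z k) + real n * zb\<^sup>2"
    by (simp add: power2_eq_square algebra_simps sum.distrib sum_subtractf sum_distrib_left)
  have "V = h * (\<Sum>k<n. (z k)\<^sup>2) - 2 * zb * (h * (\<Sum>k<n. z k)) + W * zb\<^sup>2"
    unfolding V_def W_def expand by (simp add: algebra_simps)
  then have V_eq: "V = h * (\<Sum>k<n. (z k)\<^sup>2) - W * zb\<^sup>2"
    unfolding sum1 by (simp add: power2_eq_square algebra_simps)
  have W_ge: "W \<ge> 1 / 2" "W \<ge> 1 - 2 * \<eta>" "W \<le> 1" using mesh \<eta> by (auto simp: W_def)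
  have "W * \<bar>zb\<bar> \<le> \<eta>" using moment1 W_ge by (simp add: sum1 abs_mult)
  then have zb: "\<bar>zb\<bar> \<le> 2 * \<eta>"
    using W_ge(1) mult_right_mono[OF W_ge(1) abs_ge_zero[of zb]] by linarith
  have "zb\<^sup>2 \<le> (2 * \<eta>)\<^sup>2"
    using zb by (metis abs_ge_zero power2_abs power_mono)
  also have "\<dots> \<le> \<eta> / 2" using \<eta> by (simp add: power2_eq_square)
  finally have zb2: "zb\<^sup>2 \<le> \<eta> / 2" .
  have "W * zb\<^sup>2 \<le> zb\<^sup>2" using W_ge by (simp add: mult_left_le_one_le)
  then have V: "V \<ge> 1 - 2 * \<eta>" using V_eq moment2 zb2 by linarith
  then have "V > 0" using \<eta> by linarith
  then show D: "(\<Sum>k<n. (z k - sample_mean n z)\<^sup>2) > 0"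
    using h by (simp add: V_def zb_def zero_less_mult_iff)
  have c: "0 < 1 - 2 * \<eta>" "0 \<le> 1 + 3 * \<eta>" using \<eta> by auto
  have "(1 + \<bar>zb\<bar>) / n = h * ((1 + \<bar>zb\<bar>) / W)"
    using n h by (simp add: W_def field_simps)
  also have "\<dots> \<le> h * ((1 + 3 * \<eta>) / (1 - 2 * \<eta>))"
    using zb W_ge c h \<eta> by (intro mult_left_mono frac_le) auto
  finally have bound1: "(1 + \<bar>zb\<bar>) / n \<le> h * ((1 + 3 * \<eta>) / (1 - 2 * \<eta>))" .
  have "(1 + \<bar>zb\<bar> + zb\<^sup>2) / (\<Sum>k<n. (z k - zb)\<^sup>2) = h * ((1 + \<bar>zb\<bar> + zb\<^sup>2) / V)"
    using h by (simp add: V_def)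
  also have "\<dots> \<le> h * ((1 + 3 * \<eta>) / (1 - 2 * \<eta>))"
    using zb zb2 V c h \<eta> by (intro mult_left_mono frac_le) auto
  finally show "ls_fit_bound n z \<le> h * ((1 + 3 * \<eta>) / (1 - 2 * \<eta>))"
    using bound1 by (simp add: ls_fit_bound_def zb_def)
qed

lemma ls_fit_linear:
  fixes n :: nat and z x :: "nat \<Rightarrow> real" and c :: real
  defines "zb \<equiv> sample_mean n z"
  shows "ls_fit n z x c = (\<Sum>k<n. (1 / n + (c - zb) * (z k - zb) / (\<Sum>j<n. (z j - zb)\<^sup>2)) * x k)"
proof -
  define w where "w k = (z k - zb) / (\<Sum>j<n. (z j - zb)\<^sup>2)" for k
  have slope: "ls_slope n z x = (\<Sum>k<n. w k * x k)"
    unfolding ls_slope_def sum_divide_distrib w_def zb_def by (intro sum.cong) auto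
  have mean: "sample_mean n x = (\<Sum>k<n. 1 / n * x k)"
    by (simp add: sample_mean_def sum_divide_distrib)
  have "ls_fit n z x c = (\<Sum>k<n. 1 / n * x k) + (c - zb) * (\<Sum>k<n. w k * x k)"
    by (simp add: ls_fit_def ls_intercept_def slope mean zb_def algebra_simps)
  also have "\<dots> = (\<Sum>k<n. (1 / n + (c - zb) * w k) * x k)"
    by (simp add: sum.distrib sum_distrib_left distrib_right mult.assoc)
  finally show ?thesis by (simp add: w_def)
qed

lemma has_real_derivative_ls_fit:
  assumes "\<And>k. k < n \<Longrightarrow> ((\<lambda>s. x s k) has_real_derivative x' k) (at t within S)"
  shows "((\<lambda>s. ls_fit n z (x s) c) has_real_derivative ls_fit n z x' c) (at t within S)"
  unfolding ls_fit_linear by (intro DERIV_sum DERIV_cmult) (use assms in auto)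

section \<open>Jointly measurable versions of the acceleration\<close>

(* lim is arbitrary where the right difference quotients diverge *)
definition forward_derivative :: "(real \<Rightarrow> real \<Rightarrow> real) \<Rightarrow> real \<Rightarrow> real \<Rightarrow> real" where
  "forward_derivative F t u = lim (\<lambda>n. (F (t + 1 / real (Suc n)) u - F t u) * real (Suc n))"

lemma borel_measurable_forward_derivative:
  assumes "(\<lambda>x. F (fst x) (snd x)) \<in> borel_measurable (lborel \<Otimes>\<^sub>M lborel)"
  shows "(\<lambda>x. forward_derivative F (fst x) (snd x)) \<in> borel_measurable (lborel \<Otimes>\<^sub>M lborel)"
proof -
  have "(\<lambda>x. F (fst x + c) (snd x)) \<in> borel_measurable (lborel \<Otimes>\<^sub>M lborel)" for c
    using measurable_compose[OF measurable_Pair[OF _ measurable_snd] assms, of "\<lambda>x. fst x + c"] by simp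
  then show ?thesis unfolding forward_derivative_def
    by (intro borel_measurable_lim_metric borel_measurable_times borel_measurable_diff assms) auto
qed

lemma forward_derivative_eqI:
  assumes F: "\<And>s. s \<in> {0..<1} \<Longrightarrow> F s u = f s"
    and f: "(f has_real_derivative D) (at t within {0..1})" and t: "0 \<le> t" "t < 1"
  shows "forward_derivative F t u = D"
proof -
  have "(\<lambda>n. t + 1 / real (Suc n)) \<longlonglongrightarrow> t"
    using tendsto_add[OF tendsto_const[of t] LIMSEQ_inverse_real_of_nat] by (simp add: inverse_eq_divide)
  moreover have small: "eventually (\<lambda>n. 1 / real (Suc n) < 1 - t) sequentially"
    using order_tendstoD(2)[OF LIMSEQ_inverse_real_of_nat[unfolded inverse_eq_divide], of "1 - t"] t by simp
  then have "eventually (\<lambda>n. t + 1 / real (Suc n) \<in> {0..1} - {t}) sequentially"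
    by eventually_elim (use t in auto)
  ultimately have "filterlim (\<lambda>n. t + 1 / real (Suc n)) (at t within {0..1}) sequentially"
    by (simp add: filterlim_at)
  from filterlim_compose[OF f[unfolded has_field_derivative_iff] this]
  have "(\<lambda>n. (f (t + 1 / real (Suc n)) - f t) * real (Suc n)) \<longlonglongrightarrow> D" by simp
  moreover have "eventually (\<lambda>n. (f (t + 1 / real (Suc n)) - f t) * real (Suc n)
      = (F (t + 1 / real (Suc n)) u - F t u) * real (Suc n)) sequentially"
    using small by eventually_elim (use t in \<open>simp add: F\<close>)
  from tendsto_cong[OF this] have "(\<lambda>n. (F (t + 1 / real (Suc n)) u - F t u) * real (Suc n)) \<longlonglongrightarrow> D"
    using calculation by blast
  then show ?thesis unfolding forward_derivative_def by (rule limI)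
qed

definition time_step_approx :: "(real \<Rightarrow> real \<Rightarrow> real) \<Rightarrow> nat \<Rightarrow> real \<Rightarrow> real \<Rightarrow> real" where
  "time_step_approx F j t u =
     (\<Sum>i<Suc j. indicator {real i / real (Suc j)..<real (Suc i) / real (Suc j)} t * F (real i / real (Suc j)) u)"

lemma borel_measurable_time_step_approx:
  assumes "\<And>t. t \<in> {0..1} \<Longrightarrow> F t \<in> borel_measurable lborel"
  shows "(\<lambda>x. time_step_approx F j (fst x) (snd x)) \<in> borel_measurable (lborel \<Otimes>\<^sub>M lborel)"
proof -
  have "F (real i / real (Suc j)) \<in> borel_measurable lborel" if "i < Suc j" for i
    using that by (intro assms) (auto simp: field_simps)
  then show ?thesis unfolding time_step_approx_def
    by (intro borel_measurable_sum borel_measurable_times measurable_compose[OF measurable_snd]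
        measurable_compose[OF measurable_fst]) auto
qed

lemma time_step_approx_eq:
  assumes t: "0 \<le> t" "t < 1"
  shows "time_step_approx F j t u = F (real (nat \<lfloor>real (Suc j) * t\<rfloor>) / real (Suc j)) u"
proof -
  define J where "J = real (Suc j)"
  define i0 where "i0 = nat \<lfloor>J * t\<rfloor>"
  have J: "J > 0" by (simp add: J_def)
  have floor_nonneg: "\<lfloor>J * t\<rfloor> \<ge> 0" using J t by simp
  have ind: "indicator {real i / J..<real (Suc i) / J} t = (if i = i0 then 1 else (0::real))" for i
  proof -
    have "(real i / J \<le> t \<and> t < real (Suc i) / J) \<longleftrightarrow> \<lfloor>J * t\<rfloor> = int i"
      using J by (simp add: field_simps floor_eq_iff)
    also have "\<dots> \<longleftrightarrow> i = i0" unfolding i0_def using floor_nonneg by auto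
    finally show ?thesis by (simp add: indicator_def)
  qed
  have "i0 < Suc j"
  proof -
    have "J * t < J" using J t by simp
    then have "\<lfloor>J * t\<rfloor> < int (Suc j)" by (simp add: J_def floor_less_iff)
    then show ?thesis unfolding i0_def using floor_nonneg by (simp add: nat_less_iff)
  qed
  have "time_step_approx F j t u = (\<Sum>i<Suc j. if i = i0 then F (real i / J) u else 0)"
    unfolding time_step_approx_def J_def[symmetric] by (intro sum.cong refl) (simp only: ind, simp)
  also have "\<dots> = F (real i0 / J) u"
    using \<open>i0 < Suc j\<close> by (simp add: sum.delta)
  finally show ?thesis by (simp add: i0_def J_def)
qed

lemma time_step_approx_tendsto:
  assumes t: "0 \<le> t" "t < 1" and F: "continuous_on {0..1} (\<lambda>s. F s u)"
  shows "(\<lambda>j. time_step_approx F j t u) \<longlonglongrightarrow> F t u"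
proof -
  define s where "s j = real (nat \<lfloor>real (Suc j) * t\<rfloor>) / real (Suc j)" for j :: nat
  have s: "t - 1 / real (Suc j) \<le> s j \<and> s j \<le> t \<and> s j \<in> {0..1}" for j
  proof -
    define J where "J = real (Suc j)"
    define k where "k = real (nat \<lfloor>J * t\<rfloor>)"
    have J: "J > 0" by (simp add: J_def)
    have "k = real_of_int \<lfloor>J * t\<rfloor>"
      using t J by (simp add: k_def)
    then have k: "J * t - 1 \<le> k" "k \<le> J * t"
      using of_int_floor_le[of "J * t"] real_of_int_floor_gt_diff_one[of "J * t"] by linarith+
    have "t - 1 / J = (J * t - 1) / J" using J by (simp add: field_simps)
    also have "\<dots> \<le> k / J" using k(1) J by (intro divide_right_mono) auto
    finally have "t - 1 / J \<le> k / J" .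
    moreover have "k / J \<le> t" using k(2) J by (simp add: divide_le_eq mult.commute)
    moreover have "0 \<le> k / J" using J by (simp add: k_def)
    moreover have "s j = k / J" by (simp add: s_def k_def J_def)
    ultimately show ?thesis using t unfolding J_def atLeastAtMost_iff by (intro conjI) linarith+
  qed
  have "s \<longlonglongrightarrow> t"
  proof (rule tendsto_sandwich[where f="\<lambda>j. t - 1 / real (Suc j)" and h="\<lambda>j. t"])
    show "(\<lambda>j. t - 1 / real (Suc j)) \<longlonglongrightarrow> t"
      using tendsto_diff[OF tendsto_const[of t] LIMSEQ_inverse_real_of_nat] by (simp add: inverse_eq_divide)
  qed (use s in auto)
  then have "(\<lambda>j. F (s j) u) \<longlonglongrightarrow> F t u"
    by (rule continuous_on_tendsto_compose[OF F]) (use t s in auto)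
  then show ?thesis by (simp add: time_step_approx_eq[OF t] s_def)
qed

lemma jointly_measurable_version:
  fixes F :: "real \<Rightarrow> real \<Rightarrow> real"
  assumes meas: "\<And>t. t \<in> {0..1} \<Longrightarrow> F t \<in> borel_measurable lborel"
    and cont: "\<And>u. continuous_on {0..1} (\<lambda>t. F t u)"
  obtains G where "(\<lambda>x. G (fst x) (snd x)) \<in> borel_measurable (lborel \<Otimes>\<^sub>M lborel)"
    "\<And>t u. 0 \<le> t \<Longrightarrow> t < 1 \<Longrightarrow> G t u = F t u"
proof
  show "(\<lambda>x. lim (\<lambda>j. time_step_approx F j (fst x) (snd x))) \<in> borel_measurable (lborel \<Otimes>\<^sub>M lborel)"
    by (rule borel_measurable_lim_metric) (rule borel_measurable_time_step_approx[OF meas])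
  show "lim (\<lambda>j. time_step_approx F j t u) = F t u" if "0 \<le> t" "t < 1" for t u
    by (rule limI[OF time_step_approx_tendsto[OF that cont]])
qed

lemma admissible_curve_second_derivative_version:
  assumes adm: "admissible_curve \<nu> B"
  obtains Bm where "(\<lambda>x. Bm (fst x) (snd x)) \<in> borel_measurable (lborel \<Otimes>\<^sub>M lborel)"
    "\<And>t u. 0 \<le> t \<Longrightarrow> t < 1 \<Longrightarrow> 0 < u \<Longrightarrow> u < 1 \<Longrightarrow> Bm t u = B t u"
proof -
  define F where "F t u = indicator {0<..<1} u * quantile (\<nu> t) u" for t u
  have vel: "\<exists>V. \<forall>t\<in>{0..1}. ((\<lambda>s. quantile (\<nu> s) u) has_real_derivative V t) (at t within {0..1}) \<and>
      (V has_real_derivative B t u) (at t within {0..1})" if "0 < u" "u < 1" for u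
    using adm that unfolding admissible_curve_def by auto
  have meas: "F t \<in> borel_measurable lborel" if "t \<in> {0..1}" for t
    using adm that unfolding F_def admissible_curve_def by (blast intro: borel_measurable_indicator_quantile)
  have cont: "continuous_on {0..1} (\<lambda>t. F t u)" for u
  proof (cases "0 < u \<and> u < 1")
    case True
    with vel obtain V where "\<forall>t\<in>{0..1}. ((\<lambda>s. quantile (\<nu> s) u) has_real_derivative V t) (at t within {0..1})"
      by blast
    then have "continuous_on {0..1} (\<lambda>s. quantile (\<nu> s) u)"
      unfolding continuous_on_eq_continuous_within using DERIV_continuous by blast
    then show ?thesis using True by (simp add: F_def)
  qed (simp add: F_def)
  obtain G where G: "(\<lambda>x. G (fst x) (snd x)) \<in> borel_measurable (lborel \<Otimes>\<^sub>M lborel)"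
    "\<And>t u. 0 \<le> t \<Longrightarrow> t < 1 \<Longrightarrow> G t u = F t u"
    using jointly_measurable_version[OF meas cont] by blast
  show ?thesis
  proof
    show "(\<lambda>x. forward_derivative (forward_derivative G) (fst x) (snd x)) \<in> borel_measurable (lborel \<Otimes>\<^sub>M lborel)"
      by (intro borel_measurable_forward_derivative G(1))
    fix t u :: real assume t: "0 \<le> t" "t < 1" and u: "0 < u" "u < 1"
    from vel[OF u] obtain V where V: "\<And>t. t \<in> {0..1} \<Longrightarrow> ((\<lambda>s. quantile (\<nu> s) u) has_real_derivative V t) (at t within {0..1})"
      "\<And>t. t \<in> {0..1} \<Longrightarrow> (V has_real_derivative B t u) (at t within {0..1})"
      by blast
    have "forward_derivative G s u = V s" if "s \<in> {0..<1}" for s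
      by (rule forward_derivative_eqI[of _ _ "\<lambda>s. quantile (\<nu> s) u"]) (use G(2) V(1) u that in \<open>auto simp: F_def\<close>)
    then show "forward_derivative (forward_derivative G) t u = B t u"
      by (rule forward_derivative_eqI) (use V(2) t in auto)
  qed
qed

section \<open>Tonelli and the choice of sample levels\<close>

lemma nn_integral_lebesgue_on_eq_lborel:
  fixes f g :: "real \<Rightarrow> ennreal"
  assumes S: "S \<in> sets borel" and eq: "AE x in lborel. x \<in> S \<longrightarrow> f x = g x"
  shows "(\<integral>\<^sup>+x. f x \<partial>lebesgue_on S) = (\<integral>\<^sup>+x. g x * indicator S x \<partial>lborel)"
proof -
  have "(\<integral>\<^sup>+x. f x \<partial>lebesgue_on S) = (\<integral>\<^sup>+x. f x * indicator S x \<partial>lebesgue)"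
    by (rule nn_integral_restrict_space) (use S in simp)
  also have "\<dots> = (\<integral>\<^sup>+x. g x * indicator S x \<partial>lebesgue)"
    by (rule nn_integral_cong_AE, rule AE_completion[OF eq[THEN AE_mp]]) (auto simp: indicator_def)
  also have "\<dots> = (\<integral>\<^sup>+x. g x * indicator S x \<partial>lborel)"
    by (rule nn_integral_completion)
  finally show ?thesis .
qed

lemma borel_measurable_pair_slices:
  assumes "(\<lambda>x. F (fst x) (snd x)) \<in> borel_measurable (lborel \<Otimes>\<^sub>M lborel)"
  shows "(\<lambda>t. F t u) \<in> borel_measurable lborel" "(\<lambda>u. F t u) \<in> borel_measurable lborel"
  using measurable_compose[OF measurable_Pair2'[of u lborel lborel] assms]
    measurable_compose[OF measurable_Pair1'[of t lborel lborel] assms] by simp_all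

context
  fixes Bm :: "real \<Rightarrow> real \<Rightarrow> real" and B :: "real \<Rightarrow> real \<Rightarrow> real"
  assumes Bm: "(\<lambda>x. Bm (fst x) (snd x)) \<in> borel_measurable (lborel \<Otimes>\<^sub>M lborel)"
    and Bm_eq: "\<And>t u. 0 \<le> t \<Longrightarrow> t < 1 \<Longrightarrow> 0 < u \<Longrightarrow> u < 1 \<Longrightarrow> Bm t u = B t u"
begin

lemma borel_measurable_time_energy:
  "(\<lambda>u. \<integral>\<^sup>+t. ennreal ((Bm t u)\<^sup>2) * indicator {0..1} t \<partial>lborel) \<in> borel_measurable lborel"
proof -
  have "(\<lambda>(u, t). ennreal ((Bm t u)\<^sup>2) * indicator {0..1} t) \<in> borel_measurable (lborel \<Otimes>\<^sub>M lborel)"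
    using measurable_compose[OF measurable_Pair[OF measurable_snd measurable_fst] Bm]
    by (simp add: case_prod_beta')
  then show ?thesis
    by (rule sigma_finite_measure.borel_measurable_nn_integral[OF sigma_finite_lborel])
qed

lemma espline_cost_eq_swapped:
  "espline_cost B = (\<integral>\<^sup>+u. (\<integral>\<^sup>+t. ennreal ((Bm t u)\<^sup>2) * indicator {0..1} t \<partial>lborel) * indicator {0<..<1} u \<partial>lborel)"
proof -
  have AE_not_1: "AE t in lborel. t \<noteq> (1::real)" by (rule AE_lborel_singleton)
  have "espline_cost B
      = (\<integral>\<^sup>+t. (\<integral>\<^sup>+u. ennreal ((Bm t u)\<^sup>2) * indicator {0<..<1} u \<partial>lborel) * indicator {0..1} t \<partial>lborel)"
    unfolding espline_cost_def
  proof (rule nn_integral_lebesgue_on_eq_lborel)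
    show "AE t in lborel. t \<in> {0..1} \<longrightarrow> (\<integral>\<^sup>+u. ennreal ((B t u)\<^sup>2) \<partial>lebesgue_on {0<..<1})
        = (\<integral>\<^sup>+u. ennreal ((Bm t u)\<^sup>2) * indicator {0<..<1} u \<partial>lborel)"
      using AE_not_1 by eventually_elim (auto intro!: nn_integral_lebesgue_on_eq_lborel simp: Bm_eq)
  qed simp
  also have "\<dots> = (\<integral>\<^sup>+t. \<integral>\<^sup>+u. ennreal ((Bm t u)\<^sup>2) * indicator {0<..<1} u * indicator {0..1} t \<partial>lborel \<partial>lborel)"
    by (rule nn_integral_cong, rule nn_integral_multc[symmetric])
      (use borel_measurable_pair_slices[OF Bm] in simp)
  also have "\<dots> = (\<integral>\<^sup>+u. \<integral>\<^sup>+t. ennreal ((Bm t u)\<^sup>2) * indicator {0<..<1} u * indicator {0..1} t \<partial>lborel \<partial>lborel)"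
    by (rule lborel_pair.Fubini'[symmetric]) (use Bm in \<open>simp add: case_prod_beta'\<close>)
  also have "\<dots> = (\<integral>\<^sup>+u. (\<integral>\<^sup>+t. ennreal ((Bm t u)\<^sup>2) * indicator {0..1} t \<partial>lborel) * indicator {0<..<1} u \<partial>lborel)"
    by (rule nn_integral_cong, subst nn_integral_multc[symmetric])
      (use borel_measurable_pair_slices[OF Bm] in \<open>auto intro!: nn_integral_cong simp: ac_simps\<close>)
  finally show ?thesis .
qed

lemma nn_integral_sum_samples:
  assumes c: "c \<ge> 0" and u: "\<And>k. k < n \<Longrightarrow> u k \<in> {0<..<1}"
  shows "(\<integral>\<^sup>+t. ennreal (c * (\<Sum>k<n. (B t (u k))\<^sup>2)) \<partial>lebesgue_on {0..1})
    = ennreal c * (\<Sum>k<n. \<integral>\<^sup>+t. ennreal ((Bm t (u k))\<^sup>2) * indicator {0..1} t \<partial>lborel)"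
proof -
  have "(\<integral>\<^sup>+t. ennreal (c * (\<Sum>k<n. (B t (u k))\<^sup>2)) \<partial>lebesgue_on {0..1})
      = (\<integral>\<^sup>+t. ennreal (c * (\<Sum>k<n. (Bm t (u k))\<^sup>2)) * indicator {0..1} t \<partial>lborel)"
  proof (rule nn_integral_lebesgue_on_eq_lborel)
    show "AE t in lborel. t \<in> {0..1} \<longrightarrow>
        ennreal (c * (\<Sum>k<n. (B t (u k))\<^sup>2)) = ennreal (c * (\<Sum>k<n. (Bm t (u k))\<^sup>2))"
      using AE_lborel_singleton[of 1] by eventually_elim (use u in \<open>auto simp: Bm_eq\<close>)
  qed simp
  also have "\<dots> = (\<integral>\<^sup>+t. ennreal c * (\<Sum>k<n. ennreal ((Bm t (u k))\<^sup>2) * indicator {0..1} t) \<partial>lborel)"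
    using c by (intro nn_integral_cong)
      (simp add: ennreal_mult sum_nonneg sum_distrib_right mult.assoc flip: sum_ennreal)
  also have "\<dots> = ennreal c * (\<Sum>k<n. \<integral>\<^sup>+t. ennreal ((Bm t (u k))\<^sup>2) * indicator {0..1} t \<partial>lborel)"
    using borel_measurable_pair_slices[OF Bm] by (simp add: nn_integral_cmult nn_integral_sum)
  finally show ?thesis .
qed

end

lemma exists_le_average_plus:
  fixes G :: "real \<Rightarrow> ennreal"
  assumes G: "G \<in> borel_measurable lborel" and lr: "l < r" and e: "e > 0"
  obtains u where "u \<in> {l<..<r}" "ennreal (r - l) * G u \<le> (\<integral>\<^sup>+u. G u * indicator {l<..<r} u \<partial>lborel) + ennreal e"
proof -
  define I where "I = (\<integral>\<^sup>+u. G u * indicator {l<..<r} u \<partial>lborel)"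
  have "\<exists>u \<in> {l<..<r}. ennreal (r - l) * G u \<le> I + ennreal e"
  proof (cases "I = \<infinity>")
    case True
    then show ?thesis using lr dense[OF lr] by auto
  next
    case False
    then obtain Ir where Ir: "I = ennreal Ir" "Ir \<ge> 0" by (cases I rule: ennreal_cases) auto
    show ?thesis
    proof (rule ccontr)
      assume "\<not> ?thesis"
      then have less: "\<And>u. u \<in> {l<..<r} \<Longrightarrow> I + ennreal e < ennreal (r - l) * G u"
        by (auto simp: not_le)
      have "(\<integral>\<^sup>+u. (I + ennreal e) * indicator {l<..<r} u \<partial>lborel)
          \<le> (\<integral>\<^sup>+u. ennreal (r - l) * (G u * indicator {l<..<r} u) \<partial>lborel)"
        by (rule nn_integral_mono) (auto simp: indicator_def intro: less_imp_le[OF less])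
      also have "\<dots> = ennreal (r - l) * I"
        unfolding I_def by (rule nn_integral_cmult) (use G in simp)
      finally have "ennreal ((Ir + e) * (r - l)) \<le> ennreal ((r - l) * Ir)"
        using Ir e lr by (simp add: nn_integral_cmult_indicator ennreal_mult[symmetric]
            ennreal_plus[symmetric] del: ennreal_plus)
      then have "(Ir + e) * (r - l) \<le> (r - l) * Ir"
        using Ir lr by (subst (asm) ennreal_le_iff) auto
      then show False using e lr by (simp add: algebra_simps)
    qed
  qed
  then show ?thesis using that unfolding I_def by blast
qed

lemma cell_subset_Ioo:
  assumes "k < n" "h \<ge> 0"
  shows "{a + real k * h<..<a + real (Suc k) * h} \<subseteq> {a<..<a + real n * h}"
proof -
  have "real (Suc k) * h \<le> real n * h" "0 \<le> real k * h"
    using assms by (auto intro: mult_right_mono)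
  then show ?thesis by auto
qed

lemma disjoint_family_on_cells:
  assumes h: "h > 0"
  shows "disjoint_family_on (\<lambda>k. {a + real k * h<..<a + real (Suc k) * h}) A"
proof -
  have disj: "{a + real k * h<..<a + real (Suc k) * h} \<inter> {a + real k' * h<..<a + real (Suc k') * h} = {}"
    if "k < k'" for k k'
  proof -
    have "a + real (Suc k) * h \<le> a + real k' * h"
      using that h by (intro add_left_mono mult_right_mono) auto
    then have False if "x < a + real (Suc k) * h" "a + real k' * h < x" for x
      using that by linarith
    then show ?thesis unfolding disjoint_iff greaterThanLessThan_iff by blast
  qed
  show ?thesis
    unfolding disjoint_family_on_def
  proof (intro ballI impI)
    fix k k' :: nat assume "k \<noteq> k'"
    then consider "k < k'" | "k' < k" by linarith
    then show "{a + real k * h<..<a + real (Suc k) * h} \<inter> {a + real k' * h<..<a + real (Suc k') * h} = {}"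
      by cases (use disj[of k k'] disj[of k' k] in blast)+
  qed
qed

lemma exists_samples_in_cells:
  fixes G :: "real \<Rightarrow> ennreal" and a h e :: real and n :: nat
  assumes G: "G \<in> borel_measurable lborel" and h: "h > 0" and a: "0 \<le> a" "a + real n * h \<le> 1"
    and e: "e > 0"
  obtains u where "\<And>k. k < n \<Longrightarrow> u k \<in> {a + real k * h<..<a + real (Suc k) * h}"
    "ennreal h * (\<Sum>k<n. G (u k)) \<le> (\<integral>\<^sup>+u. G u * indicator {0<..<1} u \<partial>lborel) + ennreal e"
proof (cases "n = 0")
  case True
  then show ?thesis using that by simp
next
  case False
  define C where "C k = {a + real k * h<..<a + real (Suc k) * h}" for k
  have "(\<Sum>k<n. indicator (C k) x) = (indicator (\<Union>k<n. C k) x :: ennreal)" for x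
    unfolding C_def by (rule indicator_UN_disjoint[symmetric, OF finite_lessThan disjoint_family_on_cells[OF h]])
  moreover have "(\<Union>k<n. C k) \<subseteq> {0<..<1}"
    using cell_subset_Ioo[of _ n h a] h a unfolding C_def by fastforce
  ultimately have cells_le: "(\<Sum>k<n. indicator (C k) x) \<le> (indicator {0<..<1} x :: ennreal)" for x
    by (auto simp: indicator_def)
  have "\<forall>k. \<exists>v. v \<in> C k \<and> ennreal h * G v \<le> (\<integral>\<^sup>+v. G v * indicator (C k) v \<partial>lborel) + ennreal (e / n)"
  proof
    fix k
    have lr: "a + real k * h < a + real (Suc k) * h" and en: "0 < e / n" using h e False by auto
    obtain v where v: "v \<in> C k" "ennreal (a + real (Suc k) * h - (a + real k * h)) * G v
        \<le> (\<integral>\<^sup>+v. G v * indicator (C k) v \<partial>lborel) + ennreal (e / n)"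
      unfolding C_def by (rule exists_le_average_plus[OF G lr en])
    have "a + real (Suc k) * h - (a + real k * h) = h" by (simp add: algebra_simps)
    with v show "\<exists>v. v \<in> C k \<and> ennreal h * G v \<le> (\<integral>\<^sup>+v. G v * indicator (C k) v \<partial>lborel) + ennreal (e / n)"
      by auto
  qed
  from choice[OF this] obtain u where u: "\<And>k. u k \<in> C k"
    "\<And>k. ennreal h * G (u k) \<le> (\<integral>\<^sup>+v. G v * indicator (C k) v \<partial>lborel) + ennreal (e / n)"
    by blast
  have "ennreal h * (\<Sum>k<n. G (u k)) \<le> (\<Sum>k<n. (\<integral>\<^sup>+v. G v * indicator (C k) v \<partial>lborel) + ennreal (e / n))"
    unfolding sum_distrib_left by (rule sum_mono) (rule u(2))
  also have "\<dots> = (\<Sum>k<n. \<integral>\<^sup>+v. G v * indicator (C k) v \<partial>lborel) + (\<Sum>k<n. ennreal (e / n))"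
    by (rule sum.distrib)
  also have "(\<Sum>k<n. \<integral>\<^sup>+v. G v * indicator (C k) v \<partial>lborel) = (\<integral>\<^sup>+v. (\<Sum>k<n. G v * indicator (C k) v) \<partial>lborel)"
    by (rule nn_integral_sum[symmetric]) (use G in \<open>simp add: C_def\<close>)
  also have "(\<Sum>k<n. ennreal (e / n)) = ennreal e"
    using e False by (subst sum_ennreal) auto
  also have "(\<integral>\<^sup>+v. (\<Sum>k<n. G v * indicator (C k) v) \<partial>lborel) \<le> (\<integral>\<^sup>+v. G v * indicator {0<..<1} v \<partial>lborel)"
    unfolding sum_distrib_left[symmetric] by (intro nn_integral_mono mult_left_mono cells_le) auto
  finally have "ennreal h * (\<Sum>k<n. G (u k)) \<le> (\<integral>\<^sup>+v. G v * indicator {0<..<1} v \<partial>lborel) + ennreal e"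
    by (simp add: add_right_mono)
  with u(1) show ?thesis by (intro that) (auto simp: C_def)
qed

section \<open>Gaussian fits of a curve\<close>

definition gaussian_fit :: "nat \<Rightarrow> (nat \<Rightarrow> real) \<Rightarrow> real measure \<Rightarrow> real measure" where
  "gaussian_fit n u \<mu> = gaussian
     (ls_intercept n (\<lambda>k. std_normal_quantile (u k)) (\<lambda>k. quantile \<mu> (u k)))
     (ls_slope n (\<lambda>k. std_normal_quantile (u k)) (\<lambda>k. quantile \<mu> (u k)))"

context
  fixes n :: nat and u :: "nat \<Rightarrow> real"
  assumes n: "n > 0" and u: "\<And>k. k < n \<Longrightarrow> u k \<in> {0<..<1}"
begin

lemma ls_slope_quantiles_nonneg:
  assumes "P2 \<mu>"
  shows "0 \<le> ls_slope n (\<lambda>k. std_normal_quantile (u k)) (\<lambda>k. quantile \<mu> (u k))"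
proof (rule ls_slope_nonneg[OF n])
  fix i j assume "i < n" "j < n"
  then have ij: "u i \<in> {0<..<1}" "u j \<in> {0<..<1}" using u by blast+
  have mono: "(u i \<le> u j \<longrightarrow> f (u i) \<le> f (u j)) \<and> (u j \<le> u i \<longrightarrow> f (u j) \<le> f (u i))"
    if "mono_on {0<..<1} f" for f
    using ij by (auto intro: mono_onD[OF that])
  show "0 \<le> (std_normal_quantile (u i) - std_normal_quantile (u j)) * (quantile \<mu> (u i) - quantile \<mu> (u j))"
    using mono[OF mono_on_std_normal_quantile] mono[OF mono_on_quantile[OF assms]]
    by (cases "u i \<le> u j") (auto intro: mult_nonpos_nonpos mult_nonneg_nonneg)
qed

lemma is_gaussian_gaussian_fit: "P2 \<mu> \<Longrightarrow> is_gaussian (gaussian_fit n u \<mu>)"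
  unfolding is_gaussian_def gaussian_fit_def using ls_slope_quantiles_nonneg by blast

lemma quantile_gaussian_fit:
  assumes "P2 \<mu>" "0 < v" "v < 1"
  shows "quantile (gaussian_fit n u \<mu>) v
    = ls_fit n (\<lambda>k. std_normal_quantile (u k)) (\<lambda>k. quantile \<mu> (u k)) (std_normal_quantile v)"
  unfolding gaussian_fit_def ls_fit_def
  by (rule quantile_gaussian[OF ls_slope_quantiles_nonneg[OF assms(1)] assms(2,3)])

lemma gaussian_fit_gaussian:
  assumes D: "(\<Sum>k<n. (std_normal_quantile (u k) - sample_mean n (\<lambda>k. std_normal_quantile (u k)))\<^sup>2) \<noteq> 0"
    and s: "s \<ge> 0"
  shows "gaussian_fit n u (gaussian m s) = gaussian m s"
proof -
  let ?z = "\<lambda>k. std_normal_quantile (u k)"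
  have "quantile (gaussian m s) (u k) = m + s * ?z k" if "k < n" for k
    using quantile_gaussian[OF s] u[OF that] by simp
  from ls_fit_cong[OF this] show ?thesis
    by (simp add: gaussian_fit_def ls_fit_affine[OF n D])
qed

lemma interpolates_gaussian_fit:
  assumes D: "(\<Sum>k<n. (std_normal_quantile (u k) - sample_mean n (\<lambda>k. std_normal_quantile (u k)))\<^sup>2) \<noteq> 0"
    and data: "\<And>i. i \<le> N \<Longrightarrow> is_gaussian (\<mu>s i)" and interp: "interpolates \<nu> N tt \<mu>s"
  shows "interpolates (\<lambda>t. gaussian_fit n u (\<nu> t)) N tt \<mu>s"
  unfolding interpolates_def
proof (intro allI impI)
  fix i assume i: "i \<le> N"
  from data[OF i] obtain m s where "s \<ge> 0" "\<mu>s i = gaussian m s"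
    by (auto simp: is_gaussian_def)
  moreover have "\<nu> (tt i) = \<mu>s i" using interp i by (simp add: interpolates_def)
  ultimately show "gaussian_fit n u (\<nu> (tt i)) = \<mu>s i"
    using gaussian_fit_gaussian[OF D] by simp
qed

lemma admissible_curve_gaussian_fit:
  assumes adm: "admissible_curve \<nu> B"
  shows "admissible_curve (\<lambda>t. gaussian_fit n u (\<nu> t))
    (\<lambda>t v. ls_fit n (\<lambda>k. std_normal_quantile (u k)) (\<lambda>k. B t (u k)) (std_normal_quantile v))"
proof -
  let ?z = "\<lambda>k. std_normal_quantile (u k)"
  have P2: "\<And>t. t \<in> {0..1} \<Longrightarrow> P2 (\<nu> t)" using adm by (simp add: admissible_curve_def)
  have "\<forall>v\<in>{0<..<1}. \<exists>V. \<forall>t\<in>{0..1}. ((\<lambda>s. quantile (\<nu> s) v) has_real_derivative V t) (at t within {0..1}) \<and>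
        (V has_real_derivative B t v) (at t within {0..1})"
    using adm unfolding admissible_curve_def by blast
  then obtain V where V: "\<And>v t. v \<in> {0<..<1} \<Longrightarrow> t \<in> {0..1} \<Longrightarrow>
      ((\<lambda>s. quantile (\<nu> s) v) has_real_derivative V v t) (at t within {0..1}) \<and>
      (V v has_real_derivative B t v) (at t within {0..1})"
    by metis
  show ?thesis
    unfolding admissible_curve_def
  proof (intro conjI ballI)
    fix t :: real assume "t \<in> {0..1}"
    then show "P2 (gaussian_fit n u (\<nu> t))"
      unfolding gaussian_fit_def by (rule P2_gaussian[OF ls_slope_quantiles_nonneg[OF P2]])
  next
    fix v :: real assume v: "v \<in> {0<..<1}"
    show "\<exists>W. \<forall>t\<in>{0..1}. ((\<lambda>s. quantile (gaussian_fit n u (\<nu> s)) v) has_real_derivative W t) (at t within {0..1}) \<and>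
        (W has_real_derivative ls_fit n ?z (\<lambda>k. B t (u k)) (std_normal_quantile v)) (at t within {0..1})"
    proof (intro exI ballI conjI)
      fix t :: real assume t: "t \<in> {0..1}"
      have "((\<lambda>s. ls_fit n ?z (\<lambda>k. quantile (\<nu> s) (u k)) (std_normal_quantile v)) has_real_derivative
          ls_fit n ?z (\<lambda>k. V (u k) t) (std_normal_quantile v)) (at t within {0..1})"
        by (rule has_real_derivative_ls_fit) (use V u t in auto)
      then show "((\<lambda>s. quantile (gaussian_fit n u (\<nu> s)) v) has_real_derivative
          ls_fit n ?z (\<lambda>k. V (u k) t) (std_normal_quantile v)) (at t within {0..1})"
        by (rule has_field_derivative_transform_within[OF _ zero_less_one t])
          (use quantile_gaussian_fit P2 v in auto)
      show "((\<lambda>t. ls_fit n ?z (\<lambda>k. V (u k) t) (std_normal_quantile v)) has_real_derivative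
          ls_fit n ?z (\<lambda>k. B t (u k)) (std_normal_quantile v)) (at t within {0..1})"
        by (rule has_real_derivative_ls_fit) (use V u t in auto)
    qed
  qed
qed

lemma espline_cost_gaussian_fit_le:
  assumes D: "(\<Sum>k<n. (std_normal_quantile (u k) - sample_mean n (\<lambda>k. std_normal_quantile (u k)))\<^sup>2) > 0"
  shows "espline_cost (\<lambda>t v. ls_fit n (\<lambda>k. std_normal_quantile (u k)) (\<lambda>k. B t (u k)) (std_normal_quantile v))
    \<le> (\<integral>\<^sup>+t. ennreal (ls_fit_bound n (\<lambda>k. std_normal_quantile (u k)) * (\<Sum>k<n. (B t (u k))\<^sup>2)) \<partial>lebesgue_on {0..1})"
  unfolding espline_cost_def
proof (intro nn_integral_mono)
  fix t
  show "(\<integral>\<^sup>+v. ennreal ((ls_fit n (\<lambda>k. std_normal_quantile (u k)) (\<lambda>k. B t (u k)) (std_normal_quantile v))\<^sup>2)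
      \<partial>lebesgue_on {0<..<1}) \<le> ennreal (ls_fit_bound n (\<lambda>k. std_normal_quantile (u k)) * (\<Sum>k<n. (B t (u k))\<^sup>2))"
    unfolding ls_fit_def nn_integral_affine_std_normal_quantile_square
    by (rule ennreal_leI[OF ls_fit_square_le[OF n D]])
qed

end

section \<open>Approximation by Gaussian competitors\<close>

lemma exists_sample_levels:
  fixes G :: "real \<Rightarrow> ennreal"
  assumes G: "G \<in> borel_measurable lborel" and \<eta>: "0 < \<eta>" "\<eta> \<le> 1 / 8"
  obtains n :: nat and h :: real and u :: "nat \<Rightarrow> real"
  where "0 < n" "0 < h" "\<And>k. k < n \<Longrightarrow> u k \<in> {0<..<1}"
    "(\<Sum>k<n. (std_normal_quantile (u k) - sample_mean n (\<lambda>k. std_normal_quantile (u k)))\<^sup>2) > 0"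
    "ls_fit_bound n (\<lambda>k. std_normal_quantile (u k)) \<le> h * ((1 + 3 * \<eta>) / (1 - 2 * \<eta>))"
    "ennreal h * (\<Sum>k<n. G (u k)) \<le> (\<integral>\<^sup>+u. G u * indicator {0<..<1} u \<partial>lborel) + ennreal \<eta>"
proof -
  let ?z = std_normal_quantile
  obtain a :: real and n :: nat where a: "0 < a" "a \<le> \<eta>" "2 * a < 1" and n: "0 < n"
    and grid: "\<And>u. (\<And>k. k < n \<Longrightarrow> u k \<in> {a + real k * ((1 - 2 * a) / real n) .. a + real (Suc k) * ((1 - 2 * a) / real n)}) \<Longrightarrow>
       \<bar>(1 - 2 * a) / real n * (\<Sum>k<n. ?z (u k))\<bar> \<le> \<eta> \<and>
       \<bar>(1 - 2 * a) / real n * (\<Sum>k<n. (?z (u k))\<^sup>2) - 1\<bar> \<le> \<eta>"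
    using std_normal_quantile_Riemann_grid[OF \<eta>(1)] by blast
  define h where "h = (1 - 2 * a) / real n"
  have h: "h > 0" and nh: "real n * h = 1 - 2 * a" using a n by (simp_all add: h_def)
  obtain u where cells: "\<And>k. k < n \<Longrightarrow> u k \<in> {a + real k * h<..<a + real (Suc k) * h}"
    and samples: "ennreal h * (\<Sum>k<n. G (u k)) \<le> (\<integral>\<^sup>+u. G u * indicator {0<..<1} u \<partial>lborel) + ennreal \<eta>"
    using exists_samples_in_cells[OF G h, of a n \<eta>] a nh \<eta> by auto
  have "\<And>k. k < n \<Longrightarrow> u k \<in> {0<..<1}"
    using cells cell_subset_Ioo[of _ n h a] h a nh by fastforce
  moreover have "\<bar>h * (\<Sum>k<n. ?z (u k))\<bar> \<le> \<eta>" "\<bar>h * (\<Sum>k<n. (?z (u k))\<^sup>2) - 1\<bar> \<le> \<eta>"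
    using grid[of u] cells unfolding h_def by force+
  with ls_fit_bound_le[OF n h \<eta>, of "\<lambda>k. ?z (u k)"] nh a
  have "(\<Sum>k<n. (?z (u k) - sample_mean n (\<lambda>k. ?z (u k)))\<^sup>2) > 0"
    "ls_fit_bound n (\<lambda>k. ?z (u k)) \<le> h * ((1 + 3 * \<eta>) / (1 - 2 * \<eta>))"
    by auto
  ultimately show ?thesis using that n h samples by blast
qed

lemma gaussian_lower_bound_le_espline_cost:
  assumes data: "\<And>i. i \<le> N \<Longrightarrow> is_gaussian (\<mu>s i)"
    and lower: "\<And>\<gamma>' A'. admissible_curve \<gamma>' A' \<Longrightarrow> (\<forall>t\<in>{0..1}. is_gaussian (\<gamma>' t)) \<Longrightarrow>
                interpolates \<gamma>' N tt \<mu>s \<Longrightarrow> c \<le> espline_cost A'"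
    and adm: "admissible_curve \<nu> B" and interp: "interpolates \<nu> N tt \<mu>s"
    and \<eta>: "0 < \<eta>" "\<eta> \<le> 1 / 8"
  shows "c \<le> ennreal ((1 + 3 * \<eta>) / (1 - 2 * \<eta>)) * (espline_cost B + ennreal \<eta>)"
proof -
  let ?z = std_normal_quantile
  obtain Bm where Bm: "(\<lambda>x. Bm (fst x) (snd x)) \<in> borel_measurable (lborel \<Otimes>\<^sub>M lborel)"
    "\<And>t u. 0 \<le> t \<Longrightarrow> t < 1 \<Longrightarrow> 0 < u \<Longrightarrow> u < 1 \<Longrightarrow> Bm t u = B t u"
    using admissible_curve_second_derivative_version[OF adm] by blast
  define G where "G u = (\<integral>\<^sup>+t. ennreal ((Bm t u)\<^sup>2) * indicator {0..1} t \<partial>lborel)" for u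
  have cost_B: "espline_cost B = (\<integral>\<^sup>+u. G u * indicator {0<..<1} u \<partial>lborel)"
    unfolding G_def by (rule espline_cost_eq_swapped[OF Bm])
  obtain n h u where n: "0 < n" and h: "0 < h" and u: "\<And>k. k < n \<Longrightarrow> u k \<in> {0<..<1}"
    and D: "(\<Sum>k<n. (?z (u k) - sample_mean n (\<lambda>k. ?z (u k)))\<^sup>2) > 0"
    and K: "ls_fit_bound n (\<lambda>k. ?z (u k)) \<le> h * ((1 + 3 * \<eta>) / (1 - 2 * \<eta>))"
    and samples: "ennreal h * (\<Sum>k<n. G (u k)) \<le> espline_cost B + ennreal \<eta>"
    using exists_sample_levels[OF borel_measurable_time_energy[OF Bm] \<eta>] unfolding G_def cost_B by blast
  have K0: "0 \<le> ls_fit_bound n (\<lambda>k. ?z (u k))"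
    by (simp add: ls_fit_bound_def le_max_iff_disj)
  have P2: "\<And>t. t \<in> {0..1} \<Longrightarrow> P2 (\<nu> t)" using adm by (simp add: admissible_curve_def)
  have "c \<le> espline_cost (\<lambda>t v. ls_fit n (\<lambda>k. ?z (u k)) (\<lambda>k. B t (u k)) (?z v))"
  proof (rule lower)
    show "admissible_curve (\<lambda>t. gaussian_fit n u (\<nu> t)) (\<lambda>t v. ls_fit n (\<lambda>k. ?z (u k)) (\<lambda>k. B t (u k)) (?z v))"
      using n u adm by (rule admissible_curve_gaussian_fit)
    show "\<forall>t\<in>{0..1}. is_gaussian (gaussian_fit n u (\<nu> t))"
      using is_gaussian_gaussian_fit[of n u] n u P2 by blast
    show "interpolates (\<lambda>t. gaussian_fit n u (\<nu> t)) N tt \<mu>s"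
      using n u D data interp by (intro interpolates_gaussian_fit) auto
  qed
  also have "\<dots> \<le> (\<integral>\<^sup>+t. ennreal (ls_fit_bound n (\<lambda>k. ?z (u k)) * (\<Sum>k<n. (B t (u k))\<^sup>2)) \<partial>lebesgue_on {0..1})"
    using n u D by (rule espline_cost_gaussian_fit_le)
  also have "\<dots> = ennreal (ls_fit_bound n (\<lambda>k. ?z (u k))) * (\<Sum>k<n. G (u k))"
    unfolding G_def by (rule nn_integral_sum_samples[OF Bm K0 u])
  also have "\<dots> \<le> ennreal (h * ((1 + 3 * \<eta>) / (1 - 2 * \<eta>))) * (\<Sum>k<n. G (u k))"
    by (intro mult_right_mono ennreal_leI K) simp
  also have "\<dots> = ennreal ((1 + 3 * \<eta>) / (1 - 2 * \<eta>)) * (ennreal h * (\<Sum>k<n. G (u k)))"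
  proof -
    have "0 \<le> (1 + 3 * \<eta>) / (1 - 2 * \<eta>)" using \<eta> by simp
    then show ?thesis by (simp only: ennreal_mult[OF less_imp_le[OF h]] mult_ac)
  qed
  also have "\<dots> \<le> ennreal ((1 + 3 * \<eta>) / (1 - 2 * \<eta>)) * (espline_cost B + ennreal \<eta>)"
    using samples by (rule mult_left_mono) simp
  finally show ?thesis .
qed

lemma ennreal_le_of_approximations:
  fixes x y :: ennreal
  assumes approx: "\<And>\<eta>. 0 < \<eta> \<Longrightarrow> \<eta> \<le> 1 / 8 \<Longrightarrow> x \<le> ennreal ((1 + 3 * \<eta>) / (1 - 2 * \<eta>)) * (y + ennreal \<eta>)"
  shows "x \<le> y"
proof (cases y)
  case (real c)
  define f where "f \<eta> = (1 + 3 * \<eta>) / (1 - 2 * \<eta>) * (c + \<eta>)" for \<eta> :: real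
  have x_le: "x \<le> ennreal (f \<eta>)" if "0 < \<eta>" "\<eta> \<le> 1 / 8" for \<eta>
  proof -
    have "y + ennreal \<eta> = ennreal (c + \<eta>)" using real that by (simp add: ennreal_plus)
    moreover have "ennreal ((1 + 3 * \<eta>) / (1 - 2 * \<eta>)) * ennreal (c + \<eta>) = ennreal (f \<eta>)"
      unfolding f_def using real that by (intro ennreal_mult[symmetric]) auto
    ultimately show ?thesis using approx[OF that] by simp
  qed
  have "x \<le> ennreal (f (1 / 8))" by (rule x_le) auto
  then obtain b where b: "x = ennreal b" "b \<ge> 0"
    by (cases x) (auto simp: top_unique)
  have "b \<le> f \<eta>" if "0 < \<eta>" "\<eta> \<le> 1 / 8" for \<eta>
  proof -
    have "0 \<le> f \<eta>" unfolding f_def using that real by (intro mult_nonneg_nonneg divide_nonneg_nonneg) auto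
    then show ?thesis using x_le[OF that] b by simp
  qed
  then have "eventually (\<lambda>\<eta>. b \<le> f \<eta>) (at_right 0)"
    unfolding eventually_at_right_field by (intro exI[of _ "1 / 8"]) auto
  moreover have "(f \<longlongrightarrow> (1 + 3 * 0) / (1 - 2 * 0) * (c + 0)) (at_right 0)"
    unfolding f_def by (intro tendsto_intros) auto
  ultimately have "b \<le> c" by (intro tendsto_lowerbound) auto
  then show ?thesis using b real by (simp add: ennreal_leI)
qed simp

theorem proposition9:
  fixes N :: nat and tt :: "nat \<Rightarrow> real" and \<mu>s :: "nat \<Rightarrow> real measure"
    and \<gamma> :: "real \<Rightarrow> real measure" and A :: "real \<Rightarrow> real \<Rightarrow> real"
  assumes N: "N \<ge> 1"
    and t0: "tt 0 = 0" and tN: "tt N = 1"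
    and t_mono: "\<And>i. i < N \<Longrightarrow> tt i < tt (Suc i)"
    and data_gauss: "\<And>i. i \<le> N \<Longrightarrow> is_gaussian (\<mu>s i)"
    and adm: "admissible_curve \<gamma> A"
    and gauss: "\<forall>t\<in>{0..1}. is_gaussian (\<gamma> t)"
    and interp: "interpolates \<gamma> N tt \<mu>s"
    and opt: "\<And>\<gamma>' A'. admissible_curve \<gamma>' A' \<Longrightarrow> (\<forall>t\<in>{0..1}. is_gaussian (\<gamma>' t)) \<Longrightarrow>
                interpolates \<gamma>' N tt \<mu>s \<Longrightarrow> espline_cost A \<le> espline_cost A'"
    and nondeg: "\<forall>t\<in>{0..1}. nondeg_gaussian (\<gamma> t)"
  shows "\<forall>\<nu> B. admissible_curve \<nu> B \<and> interpolates \<nu> N tt \<mu>s \<longrightarrow> espline_cost A \<le> espline_cost B"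
proof (intro allI impI, elim conjE)
  fix \<nu> B assume adm_\<nu>: "admissible_curve \<nu> B" and interp_\<nu>: "interpolates \<nu> N tt \<mu>s"
  show "espline_cost A \<le> espline_cost B"
  proof (rule ennreal_le_of_approximations)
    fix \<eta> :: real assume \<eta>: "0 < \<eta>" "\<eta> \<le> 1 / 8"
    show "espline_cost A \<le> ennreal ((1 + 3 * \<eta>) / (1 - 2 * \<eta>)) * (espline_cost B + ennreal \<eta>)"
      using data_gauss opt adm_\<nu> interp_\<nu> \<eta> by (rule gaussian_lower_bound_le_espline_cost)
  qed
qed

end
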